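(* Let $f_1,\dots,f_N:\mathbb{R}^n\to\mathbb{R}$ satisfy (H1) and (H2) stated in the context, and let $(x_k)$ be the sequence generated by Algorithm X described in the context. If $\bar x$ is an accumulation point of $(x_k)$, then $\bar x$ is a stationary point of $\Phi$, i.e. $\Phi'(\bar x;d)\ge0$ for all $d\in\mathbb{R}^n$.
   Context: (H1): there is $M\in\mathbb{R}$ with $f_j(x)\ge M$ for all $x\in\mathbb{R}^n$ and $1\le j\le N$. (H2): each $f_j\in C^1(\mathbb{R}^n)$ and there is a modulus of continuity $w$ (increasing $w:[0,\infty)\to[0,\infty)$, $w(0)=0$, continuous at $0$) with $\|\nabla f_j(x)-\nabla f_j(y)\|\le w(\|x-y\|)$ for all $x,y$ and $j$. Let $\Phi(x)=\max_{1\le j\le N}f_j(x)$, and $g'(x;d)=\lim_{t\to0^+}\frac{g(x+td)-g(x)}{t}$ denotes the directional derivative. Algorithm X: set $x_0=0$, $c=\sigma=\tfrac12$. At iteration $k=0,1,2,\dots$: let $G\in\mathbb{R}^{N\times n}$ have $j$-th row $\nabla f_j(x_k)^T$, $f=(f_1(x_k),\dots,f_N(x_k))^T$; let $\lambda$ be a solution of $\min_\lambda(\tfrac12\lambda^TGG^T\lambda-f^T\lambda)$ subject to $\sum_i\lambda_i=1$, $\lambda_i\ge0$; set $p_k=-G^T\lambda$, and $d_k=0$ if $p_k=0$, otherwise $d_k=p_k/\|p_k\|$. If $d_k=0$ set $\alpha_k=1$; otherwise $\alpha_k=\sigma^j$ with $j$ the smallest nonnegative integer such that $\Phi(x_k+\sigma^jd_k)<\Phi(x_k)+c\sigma^j\Phi'(x_k;d_k)$.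 Set $x_{k+1}=x_k+\alpha_kd_k$. *)

theory Defs
  imports "HOL-Analysis.Analysis"
begin

definition Phi :: "(nat \<Rightarrow> 'a \<Rightarrow> real) \<Rightarrow> nat \<Rightarrow> 'a \<Rightarrow> real" where
  "Phi f N x = Max ((\<lambda>j. f j x) ` {1..N})"

definition dirderiv :: "('a::real_normed_vector \<Rightarrow> real) \<Rightarrow> 'a \<Rightarrow> 'a \<Rightarrow> real" where
  "dirderiv g x d = Lim (at_right 0) (\<lambda>t. (g (x + t *\<^sub>R d) - g x) / t)"

definition simplexN :: "nat \<Rightarrow> (nat \<Rightarrow> real) set" where
  "simplexN N = {l. (\<forall>j\<in>{1..N}. 0 \<le> l j) \<and> (\<Sum>j=1..N. l j) = 1}"

text \<open>QP objective 1/2 lambda^T G G^T lambda - f^T lambda at the point x, written out: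
  G^T lambda = sum_j lambda_j grad f_j(x).\<close>
definition qp_obj :: "(nat \<Rightarrow> 'a \<Rightarrow> real) \<Rightarrow> (nat \<Rightarrow> 'a \<Rightarrow> 'a::real_inner) \<Rightarrow> nat \<Rightarrow> 'a
    \<Rightarrow> (nat \<Rightarrow> real) \<Rightarrow> real" where
  "qp_obj f gf N x l =
     1/2 * ((\<Sum>j=1..N. l j *\<^sub>R gf j x) \<bullet> (\<Sum>j=1..N. l j *\<^sub>R gf j x))
     - (\<Sum>j=1..N. f j x * l j)"

text \<open>Armijo test with c = sigma = 1/2 for step sigma^j in direction d at x.\<close>
definition armijo :: "(nat \<Rightarrow> 'a \<Rightarrow> real) \<Rightarrow> nat \<Rightarrow> 'a::real_normed_vector \<Rightarrow> 'a \<Rightarrow> nat \<Rightarrow> bool" where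
  "armijo f N x d j \<longleftrightarrow>
     Phi f N (x + ((1/2::real) ^ j) *\<^sub>R d)
       < Phi f N x + (1/2) * ((1/2::real) ^ j) * dirderiv (Phi f N) x d"

text \<open>One iteration of Algorithm X: x' is a possible successor of x (for some solution
  lambda of the QP; the QP solution need not be unique).\<close>
definition algX_step :: "(nat \<Rightarrow> 'a \<Rightarrow> real) \<Rightarrow> (nat \<Rightarrow> 'a \<Rightarrow> 'a::real_inner) \<Rightarrow> nat
    \<Rightarrow> 'a \<Rightarrow> 'a \<Rightarrow> bool" where
  "algX_step f gf N x x' \<longleftrightarrow>
     (\<exists>l. l \<in> simplexN N \<and> (\<forall>\<mu>\<in>simplexN N. qp_obj f gf N x l \<le> qp_obj f gf N x \<mu>) \<and>
        (let p = - (\<Sum>j=1..N. l j *\<^sub>R gf j x);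
             d = (if p = 0 then 0 else (1 / norm p) *\<^sub>R p)
         in if d = 0 then x' = x + 1 *\<^sub>R d
            else (\<exists>j. armijo f N x d j \<and> (\<forall>i<j. \<not> armijo f N x d i)
                     \<and> x' = x + ((1/2::real) ^ j) *\<^sub>R d)))"

end

theory Submission
  imports Defs
begin

text \<open>Along the run \<open>\<Phi>\<close> decreases: the optimality conditions of the quadratic program give
  \<open>\<Phi>'(x\<^sub>k; d\<^sub>k) \<le> -\<parallel>p\<^sub>k\<parallel>\<close>, so an accepted Armijo step of length \<open>\<alpha>\<^sub>k\<close> lowers \<open>\<Phi>\<close> by at least
  \<open>\<alpha>\<^sub>k \<parallel>p\<^sub>k\<parallel> / 2\<close>, and \<open>\<Phi>(x\<^sub>k) \<rightarrow> \<Phi>(xbar)\<close>.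

  Suppose \<open>\<Phi>'(xbar; d) < 0\<close>. The quadratic program is the dual of minimizing the model
  \<open>q \<mapsto> max\<^sub>j (f\<^sub>j(x) + \<nabla>f\<^sub>j(x)\<cdot>q) + \<parallel>q\<parallel>\<^sup>2/2\<close>, whose minimizer at \<open>x\<^sub>k\<close> is \<open>p\<^sub>k\<close>; at \<open>xbar\<close>
  the model drops below \<open>\<Phi>(xbar)\<close>, so \<open>\<parallel>p\<^sub>k\<parallel> \<ge> \<eta> > 0\<close> near \<open>xbar\<close>. Then the decrease of \<open>\<Phi>\<close>
  bounds the length of the path: from some index on the iterates stay near \<open>xbar\<close>, the whole
  sequence converges to \<open>xbar\<close>, the steps tend to \<open>0\<close>, \<open>p\<^sub>k\<close> tends to the minimizer \<open>pbar \<noteq> 0\<close> of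
  the model at \<open>xbar\<close>, and \<open>x\<^sub>k\<close> approaches \<open>xbar\<close> tangentially to \<open>dbar = pbar/\<parallel>pbar\<parallel>\<close>.
  Every active function at \<open>xbar\<close> decreases along \<open>dbar\<close> at rate at least \<open>\<parallel>pbar\<parallel>\<close>. Expanding
  the active functions to first order at \<open>x\<^sub>k\<close>, this contradicts the failure of the Armijo test
  at twice the accepted step, which must happen once the steps are short.\<close>

section \<open>Finite maxima and elementary estimates\<close>

lemma Max_image_le_Max_image_add:
  fixes a b :: "'i \<Rightarrow> real"
  assumes "finite I" "I \<noteq> {}" "\<And>j. j \<in> I \<Longrightarrow> a j \<le> b j + e"
  shows "Max (a ` I) \<le> Max (b ` I) + e"
proof -
  have "a j \<le> Max (b ` I) + e" if "j \<in> I" for j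
  proof -
    have "b j \<le> Max (b ` I)"
      using assms(1) that by (intro Max_ge) auto
    then show ?thesis
      using assms(3)[OF that] by linarith
  qed
  then show ?thesis using assms(1,2) by (simp add: Max_le_iff)
qed

lemma Max_image_attained:
  assumes "finite I" "I \<noteq> {}"
  shows "\<exists>j\<in>I. Max (a ` I) = a j"
proof -
  have "Max (a ` I) \<in> a ` I"
    using assms by (intro Max_in) auto
  then show ?thesis
    by auto
qed

lemma tendsto_Max_image:
  fixes F :: "'i \<Rightarrow> 'x \<Rightarrow> real"
  assumes "finite I" "I \<noteq> {}" "\<And>j. j \<in> I \<Longrightarrow> (F j \<longlongrightarrow> L j) net"
  shows "((\<lambda>x. Max ((\<lambda>j. F j x) ` I)) \<longlongrightarrow> Max (L ` I)) net"
  using assms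
proof (induction I rule: finite_ne_induct)
  case (singleton a)
  then show ?case by simp
next
  case (insert a I)
  then show ?case
    by (simp add: Max_insert) (intro tendsto_max; use insert in auto)
qed

lemma simplex_weighted_sum_le:
  assumes "l \<in> simplexN N" "\<And>j. j \<in> {1..N} \<Longrightarrow> a j \<le> B"
  shows "(\<Sum>j=1..N. a j * l j) \<le> B"
proof -
  have "(\<Sum>j=1..N. a j * l j) \<le> (\<Sum>j=1..N. B * l j)"
    using assms by (intro sum_mono mult_right_mono) (auto simp: simplexN_def)
  also have "\<dots> = B"
    using assms(1) by (simp add: simplexN_def flip: sum_distrib_left)
  finally show ?thesis .
qed

lemma simplex_move_to_vertex:
  assumes "l \<in> simplexN N" "j \<in> {1..N}" "0 \<le> s" "s \<le> 1"
  shows "(\<lambda>i. (1 - s) * l i + (if i = j then s else 0)) \<in> simplexN N"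
proof -
  have "(\<Sum>i=1..N. (1 - s) * l i + (if i = j then s else 0)) = (1 - s) * (\<Sum>i=1..N. l i) + s"
    using assms(2) by (simp add: sum.distrib sum_distrib_left)
  then show ?thesis
    using assms by (auto simp: simplexN_def)
qed

lemma nonneg_if_quadratic_nonneg_near_0:
  fixes X Y :: real
  assumes "\<And>s. 0 < s \<Longrightarrow> s \<le> 1 \<Longrightarrow> 0 \<le> s * X + s\<^sup>2 * Y"
  shows "0 \<le> X"
proof (rule ccontr)
  assume "\<not> 0 \<le> X"
  define s where "s = min 1 (- X / (2 * (\<bar>Y\<bar> + 1)))"
  have "0 < - X / (2 * (\<bar>Y\<bar> + 1))"
    using \<open>\<not> 0 \<le> X\<close> by (intro divide_pos_pos) auto
  then have s: "0 < s" "s \<le> 1"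
    by (auto simp: s_def)
  have "s * \<bar>Y\<bar> \<le> - X / (2 * (\<bar>Y\<bar> + 1)) * \<bar>Y\<bar>"
    by (intro mult_right_mono) (auto simp: s_def)
  also have "\<dots> \<le> - X / 2"
    using \<open>\<not> 0 \<le> X\<close> by (simp add: field_simps mult_left_mono)
  finally have "X + s * Y < 0"
    using \<open>\<not> 0 \<le> X\<close> abs_ge_self[of Y] mult_left_mono[of Y "\<bar>Y\<bar>" s] s by linarith
  then have "s * (X + s * Y) < 0"
    using s(1) by (simp add: mult_pos_neg)
  then have "s * X + s\<^sup>2 * Y < 0"
    by (simp add: power2_eq_square algebra_simps)
  with assms[OF s] show False by linarith
qed

lemma rate_bound_long_step:
  fixes h G cJ cz s \<epsilon> :: real
  assumes h: "0 < h" "h \<le> cJ" "h \<le> cz" "cz \<le> G" and \<epsilon>: "0 \<le> \<epsilon>" "\<epsilon> \<le> 1"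
    and s: "1 < s" "s \<le> 2 + \<epsilon>"
    and main: "s * cJ - cJ \<le> s * cz / 2 - cz + 2 * \<epsilon> + 5/2 * (s * \<epsilon>)"
  shows "h \<le> (G + 14) * \<epsilon>"
proof -
  have G: "0 \<le> G * \<epsilon>"
    using h \<epsilon> by simp
  show ?thesis
  proof (cases "s \<le> 2")
    case True
    have "(s - 1) * h \<le> (s - 1) * cJ" "(1 - s / 2) * h \<le> (1 - s / 2) * cz"
      using h s True by (simp_all add: mult_left_mono)
    then have "s * h \<le> 4 * \<epsilon> + 5 * (s * \<epsilon>)"
      using main by (simp add: algebra_simps)
    moreover have "4 * \<epsilon> \<le> 4 * (s * \<epsilon>)"
      using s \<epsilon> mult_right_mono[of 1 s \<epsilon>] by simp
    ultimately have "s * h \<le> s * (9 * \<epsilon>)"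
      by (simp add: algebra_simps)
    then have "h \<le> 9 * \<epsilon>"
      using s by simp
    then show ?thesis
      using G \<epsilon> by (simp add: distrib_right)
  next
    case False
    have "(s / 2 - 1) * cz \<le> (\<epsilon> / 2) * G"
      using False s h by (intro mult_mono) auto
    then have "s * cz / 2 - cz \<le> G * \<epsilon> / 2"
      by (simp add: algebra_simps)
    moreover have "1 * cJ \<le> (s - 1) * cJ"
      using False h by (intro mult_right_mono) auto
    then have "cJ \<le> s * cJ - cJ"
      by (simp add: algebra_simps)
    moreover have "s * \<epsilon> \<le> 3 * \<epsilon>"
      using s \<epsilon> mult_right_mono[of s 3 \<epsilon>] by simp
    ultimately show ?thesis
      using main h(2) \<epsilon> G by (simp add: distrib_right)
  qed
qed

text \<open>In the application, \<open>cJ\<close> and \<open>cz\<close> are the rates of decrease of two active functions at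
  the limit point along the limit direction, \<open>FJ\<close>, \<open>Fz\<close>, \<open>gJ\<close>, \<open>gz\<close> their approximations
  at an iterate, and \<open>s\<close> is the last rejected Armijo step divided by the distance to the limit.\<close>
lemma rate_estimates_bound:
  fixes h G cJ cz FJ Fz gJ gz wt s \<epsilon> :: real
  assumes h: "0 < h" "h \<le> cJ" "h \<le> cz" "cz \<le> G" and \<epsilon>: "\<epsilon> \<le> 1"
    and approx: "\<bar>FJ - cJ\<bar> \<le> \<epsilon>" "\<bar>Fz - cz\<bar> \<le> \<epsilon>" "\<bar>gJ + cJ\<bar> \<le> \<epsilon>" "\<bar>gz + cz\<bar> \<le> \<epsilon>"
    and wt: "0 \<le> wt" "wt \<le> \<epsilon>" and s: "0 \<le> s" "s \<le> 2 + \<epsilon>"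
    and D_nonneg: "0 \<le> gJ + wt - gz / 2"
    and failed: "Fz - FJ \<le> s * (gJ + wt - gz / 2)"
  shows "h \<le> (G + 14) * \<epsilon>"
proof -
  define D where "D = gJ + wt - gz / 2"
  have \<epsilon>0: "0 \<le> \<epsilon>"
    using approx(1) by linarith
  have D_le: "D \<le> cz / 2 - cJ + 5/2 * \<epsilon>"
    using approx wt by (auto simp: D_def abs_le_iff)
  have lower: "cz - cJ - 2 * \<epsilon> \<le> s * D"
    using approx failed by (auto simp: D_def abs_le_iff)
  show ?thesis
  proof (cases "s \<le> 1")
    case True
    have "s * D \<le> D"
      using True D_nonneg s by (simp add: D_def mult_left_le_one_le)
    then have "h \<le> 9 * \<epsilon>"
      using lower D_le h by linarith
    moreover have "0 \<le> G * \<epsilon>"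
      using h \<epsilon>0 by simp
    ultimately show ?thesis
      unfolding distrib_right using \<epsilon>0 by linarith
  next
    case False
    have "s * D \<le> s * (cz / 2 - cJ + 5/2 * \<epsilon>)"
      using D_le s by (intro mult_left_mono) auto
    then have "s * cJ - cJ \<le> s * cz / 2 - cz + 2 * \<epsilon> + 5/2 * (s * \<epsilon>)"
      using lower by (simp add: algebra_simps)
    then show ?thesis
      using h \<epsilon> \<epsilon>0 s False by (intro rate_bound_long_step) auto
  qed
qed

lemma norm_diff_le_telescoping:
  fixes x :: "nat \<Rightarrow> 'a::real_normed_vector"
  assumes "k \<le> m" "\<And>i. k \<le> i \<Longrightarrow> i < m \<Longrightarrow> norm (x (Suc i) - x i) \<le> c * (\<phi> i - \<phi> (Suc i))"
  shows "norm (x m - x k) \<le> c * (\<phi> k - \<phi> m)"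
  using assms
proof (induction m rule: dec_induct)
  case (step m)
  have "norm (x (Suc m) - x k) \<le> norm (x m - x k) + norm (x (Suc m) - x m)"
    using norm_triangle_ineq[of "x m - x k" "x (Suc m) - x m"] by simp
  also have "\<dots> \<le> c * (\<phi> k - \<phi> m) + c * (\<phi> m - \<phi> (Suc m))"
    using step by (intro add_mono) auto
  finally show ?case
    by (simp add: algebra_simps)
qed simp

lemma norm_diff_scaleR_unit_le:
  fixes v d :: "'a::real_normed_vector"
  assumes "norm (v - S *\<^sub>R d) \<le> \<delta> * S" "norm d = 1" "0 \<le> \<delta>" "\<delta> \<le> 1/2" "0 \<le> S"
  shows "norm (v - norm v *\<^sub>R d) \<le> 4 * \<delta> * norm v"
proof -
  have "\<bar>norm v - S\<bar> = \<bar>norm v - norm (S *\<^sub>R d)\<bar>"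
    using assms by simp
  also have "\<dots> \<le> norm (v - S *\<^sub>R d)"
    by (rule norm_triangle_ineq3)
  finally have close: "\<bar>norm v - S\<bar> \<le> \<delta> * S"
    using assms(1) by linarith
  have "norm (v - norm v *\<^sub>R d) \<le> norm (v - S *\<^sub>R d) + norm ((S - norm v) *\<^sub>R d)"
    using norm_triangle_ineq[of "v - S *\<^sub>R d" "(S - norm v) *\<^sub>R d"] by (simp add: algebra_simps)
  also have "norm ((S - norm v) *\<^sub>R d) = \<bar>norm v - S\<bar>"
    using assms(2) by simp
  finally have "norm (v - norm v *\<^sub>R d) \<le> 2 * (\<delta> * S)"
    using close assms(1) by linarith
  moreover have "\<delta> * S \<le> 1/2 * S"
    using assms by (intro mult_right_mono) auto
  then have "\<delta> * S \<le> \<delta> * (2 * norm v)"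
    using close assms by (intro mult_left_mono) auto
  ultimately show ?thesis
    by linarith
qed

section \<open>The maximum of finitely many \<open>C\<^sup>1\<close> functions\<close>

locale max_family =
  fixes f :: "nat \<Rightarrow> 'a::euclidean_space \<Rightarrow> real"
    and gf :: "nat \<Rightarrow> 'a \<Rightarrow> 'a"
    and N :: nat
    and w :: "real \<Rightarrow> real"
  assumes N_ge_1: "N \<ge> 1"
    and has_derivative_f: "\<And>j y. j \<in> {1..N} \<Longrightarrow> (f j has_derivative (\<lambda>h. gf j y \<bullet> h)) (at y)"
    and continuous_gf: "\<And>j. j \<in> {1..N} \<Longrightarrow> continuous_on UNIV (gf j)"
    and w_mono: "mono_on {0..} w"
    and w_0: "w 0 = 0"
    and w_continuous: "continuous (at 0 within {0..}) w"
    and gf_modulus: "\<And>j y z. j \<in> {1..N} \<Longrightarrow> norm (gf j y - gf j z) \<le> w (norm (y - z))"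
begin

abbreviation \<Phi> where "\<Phi> \<equiv> Phi f N"

lemma finite_index: "finite {1..N}" and index_nonempty: "{1..N} \<noteq> {}"
  using N_ge_1 by auto

lemma w_le: "0 \<le> s \<Longrightarrow> s \<le> t \<Longrightarrow> w s \<le> w t"
  using w_mono by (auto simp: mono_on_def)

lemma w_nonneg: "0 \<le> t \<Longrightarrow> 0 \<le> w t"
  using w_le[of 0 t] w_0 by simp

lemma tendsto_w:
  assumes "(g \<longlongrightarrow> 0) F" "\<forall>\<^sub>F x in F. 0 \<le> g x"
  shows "((\<lambda>x. w (g x)) \<longlongrightarrow> 0) F"
  using continuous_within_tendsto_compose[OF w_continuous, of g F] assms w_0 by simp

lemma f_linearization:
  assumes j: "j \<in> {1..N}"
  shows "\<bar>f j y - f j x - gf j x \<bullet> (y - x)\<bar> \<le> norm (y - x) * w (norm (y - x))"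
proof -
  have "norm (f j y - f j x - gf j x \<bullet> (y - x)) \<le> norm (y - x) * w (norm (y - x))"
  proof (rule differentiable_bound_linearization
      [where S = "closed_segment x y" and f' = "\<lambda>z h. gf j z \<bullet> h"])
    show "\<And>t. t \<in> {0..1} \<Longrightarrow> x + t *\<^sub>R (y - x) \<in> closed_segment x y"
      by (auto simp: closed_segment_def algebra_simps intro!: exI[of _ "_::real"])
    show "\<And>z. z \<in> closed_segment x y \<Longrightarrow>
        (f j has_derivative (\<lambda>h. gf j z \<bullet> h)) (at z within closed_segment x y)"
      using has_derivative_f[OF j] has_derivative_at_withinI by blast
    show "x \<in> closed_segment x y"
      by simp
    fix z assume z: "z \<in> closed_segment x y"
    have "onorm ((\<lambda>h. gf j z \<bullet> h) - (\<lambda>h. gf j x \<bullet> h)) \<le> norm (gf j z - gf j x)"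
      by (rule onorm_le) (auto simp: inner_diff_left[symmetric] intro: Cauchy_Schwarz_ineq2)
    also have "\<dots> \<le> w (norm (z - x))"
      using gf_modulus[OF j] by blast
    also have "\<dots> \<le> w (norm (y - x))"
      using dist_in_closed_segment[OF z] by (intro w_le) (auto simp: dist_norm norm_minus_commute)
    finally show "onorm ((\<lambda>h. gf j z \<bullet> h) - (\<lambda>h. gf j x \<bullet> h)) \<le> w (norm (y - x))" .
  qed
  then show ?thesis
    by simp
qed

lemma f_le_Phi: "j \<in> {1..N} \<Longrightarrow> f j x \<le> \<Phi> x"
  unfolding Phi_def using finite_index by (intro Max_ge) auto

lemma Phi_le: "(\<And>j. j \<in> {1..N} \<Longrightarrow> f j x \<le> B) \<Longrightarrow> \<Phi> x \<le> B"
  unfolding Phi_def using finite_index index_nonempty by (simp add: Max_le_iff)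

lemma Phi_attained: "\<exists>j\<in>{1..N}. \<Phi> x = f j x"
  unfolding Phi_def using finite_index index_nonempty by (rule Max_image_attained)

definition active :: "'a \<Rightarrow> nat set" where
  "active x = {j \<in> {1..N}. f j x = \<Phi> x}"

definition slope :: "'a \<Rightarrow> 'a \<Rightarrow> real" where
  "slope x d = Max ((\<lambda>j. gf j x \<bullet> d) ` active x)"

lemma finite_active: "finite (active x)"
  by (simp add: active_def)

lemma active_nonempty: "active x \<noteq> {}"
  using Phi_attained[of x] by (force simp: active_def)

lemma slope_ge: "j \<in> active x \<Longrightarrow> gf j x \<bullet> d \<le> slope x d"
  unfolding slope_def using finite_active by (intro Max_ge) auto

lemma slope_attained: "\<exists>j\<in>active x. slope x d = gf j x \<bullet> d"
  unfolding slope_def using finite_active active_nonempty by (rule Max_image_attained)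

lemma eventually_linearization_le_slope:
  "\<forall>\<^sub>F t in at_right 0. \<forall>j\<in>{1..N}. f j x + t * (gf j x \<bullet> d) \<le> \<Phi> x + t * slope x d"
proof (rule eventually_ball_finite[OF finite_index], intro ballI)
  fix j assume j: "j \<in> {1..N}"
  show "\<forall>\<^sub>F t in at_right 0. f j x + t * (gf j x \<bullet> d) \<le> \<Phi> x + t * slope x d"
  proof (cases "j \<in> active x")
    case True
    then have "f j x = \<Phi> x" "gf j x \<bullet> d \<le> slope x d"
      using slope_ge by (auto simp: active_def)
    then show ?thesis
      unfolding eventually_at_right_field by (intro exI[of _ 1]) (auto intro: mult_left_mono)
  next
    case False
    then have gap: "f j x < \<Phi> x"
      using f_le_Phi[OF j, of x] j by (auto simp: active_def)
    define c where "c = \<bar>gf j x \<bullet> d - slope x d\<bar> + 1"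
    have c: "c > 0"
      by (simp add: c_def)
    show ?thesis
      unfolding eventually_at_right_field
    proof (intro exI[of _ "(\<Phi> x - f j x) / c"] conjI allI impI)
      show "0 < (\<Phi> x - f j x) / c"
        using gap c by simp
      fix t :: real assume t: "0 < t" "t < (\<Phi> x - f j x) / c"
      have "t * (gf j x \<bullet> d - slope x d) \<le> t * c"
        using t by (intro mult_left_mono) (auto simp: c_def)
      also have "\<dots> < \<Phi> x - f j x"
        using t c by (simp add: field_simps)
      finally show "f j x + t * (gf j x \<bullet> d) \<le> \<Phi> x + t * slope x d"
        by (simp add: algebra_simps)
    qed
  qed
qed

lemma Phi_ray_lower:
  assumes "0 \<le> t"
  shows "\<Phi> x + t * slope x d - t * (norm d * w (t * norm d)) \<le> \<Phi> (x + t *\<^sub>R d)"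
proof -
  obtain j where j: "j \<in> active x" "slope x d = gf j x \<bullet> d"
    using slope_attained by blast
  then have j_index: "j \<in> {1..N}" and "f j x = \<Phi> x"
    by (auto simp: active_def)
  moreover have "\<bar>f j (x + t *\<^sub>R d) - f j x - gf j x \<bullet> (t *\<^sub>R d)\<bar> \<le> norm (t *\<^sub>R d) * w (norm (t *\<^sub>R d))"
    using f_linearization[OF j_index, of "x + t *\<^sub>R d" x] by simp
  ultimately have "\<Phi> x + t * slope x d - t * (norm d * w (t * norm d)) \<le> f j (x + t *\<^sub>R d)"
    using assms j by (simp add: mult.assoc abs_le_iff)
  then show ?thesis
    using f_le_Phi[OF j_index] by (rule order_trans)
qed

lemma eventually_Phi_ray_upper:
  "\<forall>\<^sub>F t in at_right 0. \<Phi> (x + t *\<^sub>R d) \<le> \<Phi> x + t * slope x d + t * (norm d * w (t * norm d))"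
  using eventually_linearization_le_slope[of x d] eventually_at_right_less[of 0]
proof eventually_elim
  case (elim t)
  show ?case
  proof (rule Phi_le)
    fix j assume j: "j \<in> {1..N}"
    have "\<bar>f j (x + t *\<^sub>R d) - f j x - gf j x \<bullet> (t *\<^sub>R d)\<bar> \<le> norm (t *\<^sub>R d) * w (norm (t *\<^sub>R d))"
      using f_linearization[OF j, of "x + t *\<^sub>R d" x] by simp
    moreover have "f j x + t * (gf j x \<bullet> d) \<le> \<Phi> x + t * slope x d"
      using elim(1) j by blast
    ultimately show "f j (x + t *\<^sub>R d) \<le> \<Phi> x + t * slope x d + t * (norm d * w (t * norm d))"
      using elim(2) by (simp add: mult.assoc abs_le_iff)
  qed
qed

lemma dirderiv_Phi: "dirderiv \<Phi> x d = slope x d"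
proof -
  let ?Q = "\<lambda>t. (\<Phi> (x + t *\<^sub>R d) - \<Phi> x) / t"
  have "((\<lambda>t. t * norm d) \<longlongrightarrow> 0) (at_right 0)"
    by (auto intro!: tendsto_eq_intros)
  moreover have "\<forall>\<^sub>F t in at_right 0. 0 \<le> t * norm d"
    using eventually_at_right_less[of 0] by eventually_elim simp
  ultimately have "((\<lambda>t. w (t * norm d)) \<longlongrightarrow> 0) (at_right 0)"
    by (rule tendsto_w)
  then have error: "((\<lambda>t. norm d * w (t * norm d)) \<longlongrightarrow> 0) (at_right 0)"
    using tendsto_mult_left[of _ 0 _ "norm d"] by simp
  have "((\<lambda>t. ?Q t - slope x d) \<longlongrightarrow> 0) (at_right 0)"
  proof (rule Lim_null_comparison[OF _ error])
    show "\<forall>\<^sub>F t in at_right 0. norm (?Q t - slope x d) \<le> norm d * w (t * norm d)"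
      using eventually_Phi_ray_upper[of x d] eventually_at_right_less[of 0]
    proof eventually_elim
      case (elim t)
      then have "\<bar>\<Phi> (x + t *\<^sub>R d) - \<Phi> x - t * slope x d\<bar> \<le> t * (norm d * w (t * norm d))"
        using Phi_ray_lower[of t x d] by (simp add: abs_le_iff)
      moreover have "?Q t - slope x d = (\<Phi> (x + t *\<^sub>R d) - \<Phi> x - t * slope x d) / t"
        using elim by (simp add: diff_divide_distrib)
      ultimately show ?case
        using elim by (simp add: pos_divide_le_eq mult.commute)
    qed
  qed
  then have "(?Q \<longlongrightarrow> slope x d) (at_right 0)"
    by (simp add: LIM_zero_iff)
  then show ?thesis
    unfolding dirderiv_def by (intro tendsto_Lim) auto
qed

lemma isCont_f: "j \<in> {1..N} \<Longrightarrow> isCont (f j) y"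
  using has_derivative_f has_derivative_continuous by blast

lemma isCont_gf: "j \<in> {1..N} \<Longrightarrow> isCont (gf j) y"
  using continuous_gf continuous_on_eq_continuous_at open_UNIV by blast

lemma tendsto_f: "j \<in> {1..N} \<Longrightarrow> (y \<longlongrightarrow> z) F \<Longrightarrow> ((\<lambda>i. f j (y i)) \<longlongrightarrow> f j z) F"
  using isCont_f isCont_tendsto_compose by blast

lemma tendsto_gf: "j \<in> {1..N} \<Longrightarrow> (y \<longlongrightarrow> z) F \<Longrightarrow> ((\<lambda>i. gf j (y i)) \<longlongrightarrow> gf j z) F"
  using isCont_gf isCont_tendsto_compose by blast

lemma tendsto_Phi: "(y \<longlongrightarrow> z) F \<Longrightarrow> ((\<lambda>i. \<Phi> (y i)) \<longlongrightarrow> \<Phi> z) F"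
  unfolding Phi_def using finite_index index_nonempty by (intro tendsto_Max_image tendsto_f)

lemma LIMSEQ_linearization_remainder:
  assumes j: "j \<in> {1..N}" and lim: "y \<longlonglongrightarrow> z"
  shows "(\<lambda>k. (f j (y k) - f j z - gf j z \<bullet> (y k - z)) / norm (y k - z)) \<longlonglongrightarrow> 0"
proof (rule Lim_null_comparison)
  show "\<forall>\<^sub>F k in sequentially. norm ((f j (y k) - f j z - gf j z \<bullet> (y k - z)) / norm (y k - z))
      \<le> w (norm (y k - z))"
  proof (intro always_eventually allI)
    fix k
    have "\<bar>f j (y k) - f j z - gf j z \<bullet> (y k - z)\<bar> \<le> norm (y k - z) * w (norm (y k - z))"
      by (rule f_linearization[OF j])
    then show "norm ((f j (y k) - f j z - gf j z \<bullet> (y k - z)) / norm (y k - z)) \<le> w (norm (y k - z))"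
      by (cases "y k = z") (simp_all add: w_0 divide_le_eq mult.commute)
  qed
  have "(\<lambda>k. norm (y k - z)) \<longlonglongrightarrow> 0"
    using tendsto_norm[OF tendsto_diff[OF lim tendsto_const[of z]]] by simp
  then show "(\<lambda>k. w (norm (y k - z))) \<longlonglongrightarrow> 0"
    by (rule tendsto_w) simp
qed

lemma eventually_active_subset:
  assumes lim: "(y \<longlongrightarrow> z) F"
  shows "\<forall>\<^sub>F i in F. active (y i) \<subseteq> active z"
proof -
  have "\<forall>\<^sub>F i in F. \<forall>j\<in>{1..N}. j \<notin> active z \<longrightarrow> f j (y i) < \<Phi> (y i)"
  proof (rule eventually_ball_finite[OF finite_index], intro ballI)
    fix j assume j: "j \<in> {1..N}"
    show "\<forall>\<^sub>F i in F. j \<notin> active z \<longrightarrow> f j (y i) < \<Phi> (y i)"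
    proof (cases "j \<in> active z")
      case False
      then have "0 < \<Phi> z - f j z"
        using j f_le_Phi[of j z] by (auto simp: active_def)
      moreover have "((\<lambda>i. \<Phi> (y i) - f j (y i)) \<longlongrightarrow> \<Phi> z - f j z) F"
        using j by (intro tendsto_diff tendsto_Phi tendsto_f lim)
      ultimately have "\<forall>\<^sub>F i in F. 0 < \<Phi> (y i) - f j (y i)"
        using order_tendstoD(1) by blast
      then show ?thesis
        by eventually_elim simp
    qed simp
  qed
  then show ?thesis
    by eventually_elim (auto simp: active_def[of "y _"])
qed

subsection \<open>The dual quadratic program\<close>

text \<open>Minimizing \<open>qp_model x\<close> is the dual of the quadratic program of Algorithm X: for every
  solution \<open>l\<close> of the latter, \<open>qp_dir x l\<close> is the minimizer (\<open>qp_model_quadratic_growth\<close>).\<close>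
definition qp_model :: "'a \<Rightarrow> 'a \<Rightarrow> real" where
  "qp_model x q = Max ((\<lambda>j. f j x + gf j x \<bullet> q) ` {1..N}) + 1/2 * (q \<bullet> q)"

definition qp_solution :: "'a \<Rightarrow> (nat \<Rightarrow> real) \<Rightarrow> bool" where
  "qp_solution x l \<longleftrightarrow> l \<in> simplexN N \<and> (\<forall>\<mu>\<in>simplexN N. qp_obj f gf N x l \<le> qp_obj f gf N x \<mu>)"

definition qp_dir :: "'a \<Rightarrow> (nat \<Rightarrow> real) \<Rightarrow> 'a" where
  "qp_dir x l = - (\<Sum>j=1..N. l j *\<^sub>R gf j x)"

lemma qp_obj_move_to_vertex:
  fixes x :: 'a and l :: "nat \<Rightarrow> real"
  assumes j: "j \<in> {1..N}"
  defines "p \<equiv> qp_dir x l"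
  shows "qp_obj f gf N x (\<lambda>i. (1 - s) * l i + (if i = j then s else 0))
    = 1/2 * ((s *\<^sub>R (gf j x + p) - p) \<bullet> (s *\<^sub>R (gf j x + p) - p))
      - ((1 - s) * (\<Sum>i=1..N. f i x * l i) + s * f j x)"
proof -
  have "(\<Sum>i=1..N. ((1 - s) * l i + (if i = j then s else 0)) *\<^sub>R gf i x)
      = (1 - s) *\<^sub>R (- p) + s *\<^sub>R gf j x"
    using j by (simp add: p_def qp_dir_def scaleR_add_left sum.distrib scaleR_sum_right
        if_distrib[of "\<lambda>c. c *\<^sub>R _"] cong: if_cong)
  also have "\<dots> = s *\<^sub>R (gf j x + p) - p"
    by (simp add: algebra_simps)
  finally have grad:
    "(\<Sum>i=1..N. ((1 - s) * l i + (if i = j then s else 0)) *\<^sub>R gf i x) = s *\<^sub>R (gf j x + p) - p" .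
  have "(\<Sum>i=1..N. f i x * ((1 - s) * l i + (if i = j then s else 0)))
      = (\<Sum>i=1..N. (1 - s) * (f i x * l i) + (if i = j then s * f j x else 0))"
    by (rule sum.cong) (auto simp: algebra_simps)
  also have "\<dots> = (1 - s) * (\<Sum>i=1..N. f i x * l i) + s * f j x"
    using j by (simp add: sum.distrib flip: sum_distrib_left)
  finally show ?thesis
    by (simp only: qp_obj_def grad)
qed

lemma qp_solution_optimality:
  assumes sol: "qp_solution x l" and j: "j \<in> {1..N}"
  shows "f j x + gf j x \<bullet> qp_dir x l \<le> (\<Sum>i=1..N. f i x * l i) - qp_dir x l \<bullet> qp_dir x l"
proof -
  define p where "p = qp_dir x l"
  define F where "F = (\<Sum>i=1..N. f i x * l i)"
  define v where "v = gf j x + p"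
  have l: "l \<in> simplexN N"
    and l_min: "\<And>\<mu>. \<mu> \<in> simplexN N \<Longrightarrow> qp_obj f gf N x l \<le> qp_obj f gf N x \<mu>"
    using sol by (auto simp: qp_solution_def)
  have "0 \<le> s * (F - f j x - p \<bullet> v) + s\<^sup>2 * (1/2 * (v \<bullet> v))" if s: "0 < s" "s \<le> 1" for s
  proof -
    have "qp_obj f gf N x l \<le> qp_obj f gf N x (\<lambda>i. (1 - s) * l i + (if i = j then s else 0))"
      using s by (intro l_min simplex_move_to_vertex l j) auto
    moreover have "qp_obj f gf N x l = 1/2 * (p \<bullet> p) - F"
      by (simp add: qp_obj_def p_def F_def qp_dir_def)
    moreover have "(s *\<^sub>R v - p) \<bullet> (s *\<^sub>R v - p) = p \<bullet> p - 2 * s * (p \<bullet> v) + s\<^sup>2 * (v \<bullet> v)"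
      by (simp add: inner_diff_left inner_diff_right inner_commute power2_eq_square algebra_simps)
    ultimately show ?thesis
      using qp_obj_move_to_vertex[OF j, where x = x and l = l and s = s]
      by (simp add: p_def F_def v_def algebra_simps)
  qed
  then have "0 \<le> F - f j x - p \<bullet> v"
    by (rule nonneg_if_quadratic_nonneg_near_0)
  then show ?thesis
    by (simp add: p_def F_def v_def inner_add_right inner_commute)
qed

lemma qp_solution_le_Phi:
  assumes "qp_solution x l" "j \<in> {1..N}"
  shows "f j x + gf j x \<bullet> qp_dir x l \<le> \<Phi> x - qp_dir x l \<bullet> qp_dir x l"
proof -
  have "(\<Sum>i=1..N. f i x * l i) \<le> \<Phi> x"
    using assms(1) f_le_Phi by (intro simplex_weighted_sum_le) (auto simp: qp_solution_def)
  then show ?thesis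
    using qp_solution_optimality[OF assms] by simp
qed

lemma slope_sgn_qp_dir_le:
  assumes "qp_solution x l"
  shows "slope x (sgn (qp_dir x l)) \<le> - norm (qp_dir x l)"
proof -
  define p where "p = qp_dir x l"
  obtain j where j: "j \<in> active x" "slope x (sgn p) = gf j x \<bullet> sgn p"
    using slope_attained by blast
  then have "gf j x \<bullet> p \<le> - (norm p * norm p)"
    using qp_solution_le_Phi[OF assms, of j]
    by (simp add: active_def p_def flip: power2_norm_eq_inner power2_eq_square)
  moreover have "gf j x \<bullet> sgn p = (gf j x \<bullet> p) / norm p"
    by (simp add: sgn_div_norm divide_inverse mult.commute)
  ultimately have "gf j x \<bullet> sgn p \<le> - norm p"
    by (cases "p = 0") (auto simp: divide_le_eq)
  then show ?thesis
    using j by (simp add: p_def)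
qed

lemma qp_model_quadratic_growth:
  assumes sol: "qp_solution x l"
  shows "qp_model x (qp_dir x l) + 1/2 * ((q - qp_dir x l) \<bullet> (q - qp_dir x l)) \<le> qp_model x q"
proof -
  define p where "p = qp_dir x l"
  define F where "F = (\<Sum>i=1..N. f i x * l i)"
  have l: "l \<in> simplexN N"
    using sol by (simp add: qp_solution_def)
  have "Max ((\<lambda>j. f j x + gf j x \<bullet> p) ` {1..N}) \<le> F - p \<bullet> p"
    using qp_solution_optimality[OF sol] finite_index index_nonempty
    by (simp add: Max_le_iff p_def F_def)
  then have at_p: "qp_model x p \<le> F - 1/2 * (p \<bullet> p)"
    by (simp add: qp_model_def)
  have "(\<Sum>j=1..N. (f j x + gf j x \<bullet> q) * l j) \<le> Max ((\<lambda>j. f j x + gf j x \<bullet> q) ` {1..N})"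
    using l finite_index by (intro simplex_weighted_sum_le Max_ge) auto
  moreover have "(\<Sum>j=1..N. (f j x + gf j x \<bullet> q) * l j) = F - p \<bullet> q"
    by (simp add: F_def p_def qp_dir_def inner_sum_left algebra_simps sum.distrib sum_subtractf)
  ultimately have "F - p \<bullet> q + 1/2 * (q \<bullet> q) \<le> qp_model x q"
    by (simp add: qp_model_def)
  moreover have "(q - p) \<bullet> (q - p) = q \<bullet> q - 2 * (p \<bullet> q) + p \<bullet> p"
    by (simp add: inner_diff_left inner_diff_right inner_commute)
  ultimately show ?thesis
    using at_p by (simp add: p_def algebra_simps)
qed

lemma qp_model_0: "qp_model y 0 = \<Phi> y"
  by (simp add: qp_model_def Phi_def)

lemma tendsto_qp_model:
  assumes "(y \<longlongrightarrow> z) F" "(q' \<longlongrightarrow> q) F"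
  shows "((\<lambda>i. qp_model (y i) (q' i)) \<longlongrightarrow> qp_model z q) F"
  unfolding qp_model_def using finite_index index_nonempty assms
  by (intro tendsto_add tendsto_mult tendsto_const tendsto_inner tendsto_Max_image tendsto_f tendsto_gf)
    auto

lemma qp_model_ge:
  assumes "\<And>j. j \<in> {1..N} \<Longrightarrow> norm (gf j y) \<le> G"
  shows "\<Phi> y - G * norm q \<le> qp_model y q"
proof -
  obtain j where j: "j \<in> {1..N}" "\<Phi> y = f j y"
    using Phi_attained by blast
  have "- (norm (gf j y) * norm q) \<le> gf j y \<bullet> q"
    using Cauchy_Schwarz_ineq2[of "gf j y" q] by linarith
  moreover have "norm (gf j y) * norm q \<le> G * norm q"
    using assms[OF j(1)] by (intro mult_right_mono) auto
  moreover have "f j y + gf j y \<bullet> q \<le> Max ((\<lambda>j. f j y + gf j y \<bullet> q) ` {1..N})"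
    using j finite_index by (intro Max_ge) auto
  moreover have "0 \<le> q \<bullet> q"
    by simp
  ultimately show ?thesis
    unfolding qp_model_def using j(2) by linarith
qed

lemma qp_model_diff_le:
  "qp_model y q - qp_model z q \<le> (\<Sum>j=1..N. \<bar>f j y - f j z\<bar> + norm (gf j y - gf j z) * norm q)"
proof -
  let ?E = "\<Sum>j=1..N. \<bar>f j y - f j z\<bar> + norm (gf j y - gf j z) * norm q"
  have "Max ((\<lambda>j. f j y + gf j y \<bullet> q) ` {1..N}) \<le> Max ((\<lambda>j. f j z + gf j z \<bullet> q) ` {1..N}) + ?E"
  proof (rule Max_image_le_Max_image_add[OF finite_index index_nonempty])
    fix j assume j: "j \<in> {1..N}"
    have "gf j y \<bullet> q - gf j z \<bullet> q \<le> norm (gf j y - gf j z) * norm q"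
      by (metis inner_diff_left norm_cauchy_schwarz)
    moreover have "\<bar>f j y - f j z\<bar> + norm (gf j y - gf j z) * norm q \<le> ?E"
      using j by (intro member_le_sum) auto
    ultimately show "f j y + gf j y \<bullet> q \<le> f j z + gf j z \<bullet> q + ?E"
      by linarith
  qed
  then show ?thesis
    by (simp add: qp_model_def)
qed

lemma qp_minimizers_close:
  assumes min_y: "\<And>q. qp_model y p + 1/2 * ((q - p) \<bullet> (q - p)) \<le> qp_model y q"
    and min_z: "\<And>q. qp_model z p' + 1/2 * ((q - p') \<bullet> (q - p')) \<le> qp_model z q"
    and "norm p \<le> C" "norm p' \<le> C"
  shows "norm (p - p') ^ 2 \<le> 2 * (\<Sum>j=1..N. \<bar>f j y - f j z\<bar> + norm (gf j y - gf j z) * C)"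
proof -
  define E where "E = (\<Sum>j=1..N. \<bar>f j y - f j z\<bar> + norm (gf j y - gf j z) * C)"
  have E_ge: "(\<Sum>j=1..N. \<bar>f j y - f j z\<bar> + norm (gf j y - gf j z) * norm q) \<le> E" if "norm q \<le> C" for q
    unfolding E_def using that by (intro sum_mono add_left_mono mult_left_mono) auto
  have "qp_model y p' - qp_model z p' \<le> E"
    using qp_model_diff_le[of y p' z] E_ge[OF assms(4)] by linarith
  moreover have "qp_model z p - qp_model y p \<le> E"
    using qp_model_diff_le[of z p y] E_ge[OF assms(3)] by (simp add: abs_minus_commute norm_minus_commute)
  moreover have "(p' - p) \<bullet> (p' - p) = norm (p - p') ^ 2" "(p - p') \<bullet> (p - p') = norm (p - p') ^ 2"
    by (simp_all add: dot_square_norm norm_minus_commute)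
  ultimately show ?thesis
    using min_y[of p'] min_z[of p] by (simp add: E_def)
qed

lemma exists_qp_model_less_Phi:
  assumes "slope z d < 0"
  shows "\<exists>q. qp_model z q < \<Phi> z"
proof -
  obtain b where b: "b > 0"
    "\<And>t. 0 < t \<Longrightarrow> t < b \<Longrightarrow> \<forall>j\<in>{1..N}. f j z + t * (gf j z \<bullet> d) \<le> \<Phi> z + t * slope z d"
    using eventually_linearization_le_slope[of z d] by (auto simp: eventually_at_right_field)
  define t where "t = min (b/2) (- slope z d / (d \<bullet> d + 1))"
  have D: "0 < d \<bullet> d + 1"
    by (simp add: add_nonneg_pos)
  then have "0 < - slope z d / (d \<bullet> d + 1)"
    using assms by (intro divide_pos_pos) auto
  then have t: "0 < t" "t < b"
    using b(1) by (auto simp: t_def)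
  have "t * (d \<bullet> d) \<le> - slope z d / (d \<bullet> d + 1) * (d \<bullet> d)"
    by (intro mult_right_mono) (auto simp: t_def)
  also have "\<dots> = - slope z d * ((d \<bullet> d) / (d \<bullet> d + 1))"
    by simp
  also have "\<dots> \<le> - slope z d * 1"
    by (intro mult_left_mono) (use assms in \<open>simp_all add: pos_divide_le_eq[OF D]\<close>)
  finally have "t * (t * (d \<bullet> d)) \<le> t * (- slope z d)"
    using t by (intro mult_left_mono) auto
  moreover have "Max ((\<lambda>j. f j z + gf j z \<bullet> (t *\<^sub>R d)) ` {1..N}) \<le> \<Phi> z + t * slope z d"
    using b(2)[OF t] finite_index index_nonempty by (simp add: Max_le_iff)
  moreover have "t * slope z d < 0"
    using t assms by (simp add: mult_pos_neg)
  ultimately have "qp_model z (t *\<^sub>R d) < \<Phi> z"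
    by (simp add: qp_model_def algebra_simps)
  then show ?thesis
    by blast
qed

definition grad_bound :: "'a \<Rightarrow> real" where
  "grad_bound z = 1 + (\<Sum>j=1..N. norm (gf j z)) + w 1"

lemma grad_bound_ge_1: "1 \<le> grad_bound z"
  using w_nonneg[of 1] by (simp add: grad_bound_def sum_nonneg)

lemma norm_gf_le_grad_bound:
  assumes j: "j \<in> {1..N}" and y: "norm (y - z) \<le> 1"
  shows "norm (gf j y) \<le> grad_bound z"
proof -
  have "norm (gf j y) \<le> norm (gf j z) + norm (gf j y - gf j z)"
    by (metis norm_triangle_sub add.commute)
  also have "norm (gf j y - gf j z) \<le> w 1"
    using gf_modulus[OF j, of y z] w_le[of "norm (y - z)" 1] y by simp
  also have "norm (gf j z) \<le> (\<Sum>j=1..N. norm (gf j z))"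
    using j by (intro member_le_sum) auto
  finally show ?thesis
    by (simp add: grad_bound_def)
qed

lemma qp_model_less_Phi_nearby:
  assumes "qp_model z q < \<Phi> z"
  shows "\<exists>\<rho> \<beta>. 0 < \<rho> \<and> \<rho> \<le> 1 \<and> 0 < \<beta> \<and>
    (\<forall>y. norm (y - z) < \<rho> \<longrightarrow> qp_model y q < \<Phi> z - 2 * \<beta> \<and> \<Phi> z - \<beta> < \<Phi> y)"
proof -
  define \<beta> where "\<beta> = (\<Phi> z - qp_model z q) / 3"
  have \<beta>: "0 < \<beta>"
    using assms by (simp add: \<beta>_def)
  have "((\<lambda>y. qp_model y q) \<longlongrightarrow> qp_model z q) (at z)"
    by (rule tendsto_qp_model) auto
  moreover have "(\<Phi> \<longlongrightarrow> \<Phi> z) (at z)"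
    using tendsto_Phi[of "\<lambda>y. y"] by auto
  ultimately have "\<forall>\<^sub>F y in at z. dist (qp_model y q) (qp_model z q) < \<beta> \<and> dist (\<Phi> y) (\<Phi> z) < \<beta>"
    using \<beta> by (auto intro: eventually_conj tendstoD)
  then obtain \<rho> where \<rho>: "0 < \<rho>"
    "\<And>y. y \<noteq> z \<Longrightarrow> dist y z < \<rho> \<Longrightarrow> dist (qp_model y q) (qp_model z q) < \<beta> \<and> dist (\<Phi> y) (\<Phi> z) < \<beta>"
    by (auto simp: eventually_at)
  have "qp_model y q < \<Phi> z - 2 * \<beta> \<and> \<Phi> z - \<beta> < \<Phi> y" if "norm (y - z) < min \<rho> 1" for y
  proof (cases "y = z")
    case False
    then have "qp_model y q - qp_model z q < \<beta>" "\<Phi> z - \<Phi> y < \<beta>"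
      using \<rho>(2)[of y] that by (auto simp: dist_norm abs_less_iff)
    moreover have "3 * \<beta> = \<Phi> z - qp_model z q"
      by (simp add: \<beta>_def)
    ultimately show ?thesis
      by linarith
  qed (use assms in \<open>simp add: \<beta>_def field_simps\<close>)
  then show ?thesis
    using \<rho>(1) \<beta> by (intro exI[of _ "min \<rho> 1"] exI[of _ \<beta>]) auto
qed

definition armijo_step :: "'a \<Rightarrow> 'a \<Rightarrow> 'a \<Rightarrow> bool" where
  "armijo_step x d x' \<longleftrightarrow>
    (\<exists>j. armijo f N x d j \<and> (\<forall>i<j. \<not> armijo f N x d i) \<and> x' = x + (1/2::real) ^ j *\<^sub>R d)"

lemma algX_step_imp:
  assumes "algX_step f gf N x x'"
  shows "\<exists>l. qp_solution x l \<and>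
    (if qp_dir x l = 0 then x' = x else armijo_step x (sgn (qp_dir x l)) x')"
proof -
  have unit_dir: "(if p = 0 then 0 else (1 / norm p) *\<^sub>R p) = sgn p" for p :: 'a
    by (simp add: sgn_div_norm divide_inverse)
  from assms obtain l where "qp_solution x l"
    and "let p = qp_dir x l; d = (if p = 0 then 0 else (1 / norm p) *\<^sub>R p)
      in if d = 0 then x' = x + 1 *\<^sub>R d
         else (\<exists>j. armijo f N x d j \<and> (\<forall>i<j. \<not> armijo f N x d i) \<and> x' = x + (1/2::real) ^ j *\<^sub>R d)"
    unfolding algX_step_def qp_solution_def qp_dir_def by blast
  then show ?thesis
    unfolding Let_def unit_dir by (intro exI[of _ l]) (auto simp: armijo_step_def sgn_zero_iff)
qed

end

section \<open>Runs of Algorithm X\<close>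

locale algX_run = max_family f gf N w
  for f :: "nat \<Rightarrow> 'a::euclidean_space \<Rightarrow> real" and gf N w +
  fixes x :: "nat \<Rightarrow> 'a" and L :: "nat \<Rightarrow> nat \<Rightarrow> real" and xbar :: 'a and r :: "nat \<Rightarrow> nat"
  assumes qp_solution_L: "\<And>k. qp_solution (x k) (L k)"
    and step: "\<And>k. if qp_dir (x k) (L k) = 0 then x (Suc k) = x k
      else armijo_step (x k) (sgn (qp_dir (x k) (L k))) (x (Suc k))"
    and strict_mono_r: "strict_mono r"
    and LIMSEQ_subseq_xbar: "(x \<circ> r) \<longlonglongrightarrow> xbar"
begin

abbreviation pk :: "nat \<Rightarrow> 'a" where
  "pk k \<equiv> qp_dir (x k) (L k)"

abbreviation dk :: "nat \<Rightarrow> 'a" where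
  "dk k \<equiv> sgn (pk k)"

lemma armijo_step_taken:
  assumes "pk k \<noteq> 0"
  obtains j where "armijo f N (x k) (dk k) j" "\<forall>i<j. \<not> armijo f N (x k) (dk k) i"
    "x (Suc k) = x k + (1/2::real) ^ j *\<^sub>R dk k"
  using step[of k] assms by (auto simp: armijo_step_def)

lemma step_length:
  assumes "pk k \<noteq> 0"
  obtains j where "norm (x (Suc k) - x k) = (1/2::real) ^ j" "x (Suc k) = x k + (1/2::real) ^ j *\<^sub>R dk k"
proof -
  obtain j where "x (Suc k) = x k + (1/2::real) ^ j *\<^sub>R dk k"
    using armijo_step_taken[OF assms] by metis
  moreover from this have "norm (x (Suc k) - x k) = (1/2::real) ^ j"
    using assms by (simp add: norm_sgn)
  ultimately show ?thesis
    using that by blast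
qed

lemma step_eq: "x (Suc k) - x k = norm (x (Suc k) - x k) *\<^sub>R dk k"
proof (cases "pk k = 0")
  case True
  then show ?thesis
    using step[of k] by simp
next
  case False
  then show ?thesis
    by (rule step_length) simp
qed

lemma step_mul_inner_le:
  assumes "norm v = 1" "0 \<le> (z - x (Suc k)) \<bullet> v"
  shows "norm (x (Suc k) - x k) * (dk k \<bullet> v) \<le> norm (x k - z)"
proof -
  have "z - x k = norm (x (Suc k) - x k) *\<^sub>R dk k + (z - x (Suc k))"
    using step_eq[of k] by (simp add: algebra_simps)
  then have "(z - x k) \<bullet> v = (norm (x (Suc k) - x k) *\<^sub>R dk k + (z - x (Suc k))) \<bullet> v"
    by (rule arg_cong)
  also have "\<dots> = norm (x (Suc k) - x k) * (dk k \<bullet> v) + (z - x (Suc k)) \<bullet> v"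
    by (simp add: inner_add_left)
  finally have "(z - x k) \<bullet> v = norm (x (Suc k) - x k) * (dk k \<bullet> v) + (z - x (Suc k)) \<bullet> v" .
  moreover have "(z - x k) \<bullet> v \<le> norm (x k - z)"
    using norm_cauchy_schwarz[of "z - x k" v] assms(1) by (simp add: norm_minus_commute)
  ultimately show ?thesis
    using assms(2) by linarith
qed

lemma path_near_ray:
  assumes "\<And>i. k \<le> i \<Longrightarrow> norm (dk i - v) \<le> \<delta>"
  shows "\<exists>S\<ge>0. norm (x (k + m) - x k - S *\<^sub>R v) \<le> \<delta> * S"
proof (induction m)
  case 0
  show ?case
    by (intro exI[of _ 0]) simp
next
  case (Suc m)
  then obtain S where S: "0 \<le> S" "norm (x (k + m) - x k - S *\<^sub>R v) \<le> \<delta> * S"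
    by blast
  define a where "a = norm (x (Suc (k + m)) - x (k + m))"
  have "x (k + Suc m) - x k - (S + a) *\<^sub>R v = (x (k + m) - x k - S *\<^sub>R v) + a *\<^sub>R (dk (k + m) - v)"
    using step_eq[of "k + m"] by (simp add: a_def algebra_simps)
  then have "norm (x (k + Suc m) - x k - (S + a) *\<^sub>R v)
      \<le> norm (x (k + m) - x k - S *\<^sub>R v) + norm (a *\<^sub>R (dk (k + m) - v))"
    by (metis norm_triangle_ineq)
  moreover have "norm (a *\<^sub>R (dk (k + m) - v)) \<le> a * \<delta>"
    using assms[of "k + m"] by (simp add: a_def mult_left_mono)
  ultimately have "norm (x (k + Suc m) - x k - (S + a) *\<^sub>R v) \<le> \<delta> * (S + a)"
    using S(2) by (simp add: algebra_simps)
  then show ?case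
    using S(1) by (intro exI[of _ "S + a"]) (simp add: a_def)
qed

lemma Phi_descent: "\<Phi> (x (Suc k)) \<le> \<Phi> (x k) - 1/2 * norm (x (Suc k) - x k) * norm (pk k)"
proof (cases "pk k = 0")
  case True
  then show ?thesis
    using step[of k] by simp
next
  case False
  then obtain j where j: "armijo f N (x k) (dk k) j" "x (Suc k) = x k + (1/2::real) ^ j *\<^sub>R dk k"
    by (rule armijo_step_taken)
  have "\<Phi> (x (Suc k)) < \<Phi> (x k) + 1/2 * (1/2) ^ j * slope (x k) (dk k)"
    using j by (simp add: armijo_def dirderiv_Phi)
  also have "\<dots> \<le> \<Phi> (x k) + 1/2 * (1/2) ^ j * (- norm (pk k))"
    using slope_sgn_qp_dir_le[OF qp_solution_L] by (intro add_left_mono mult_left_mono) auto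
  finally show ?thesis
    using j(2) False by (simp add: norm_sgn)
qed

lemma Phi_Suc_le: "\<Phi> (x (Suc k)) \<le> \<Phi> (x k)"
proof -
  have "0 \<le> 1/2 * norm (x (Suc k) - x k) * norm (pk k)"
    by simp
  then show ?thesis
    using Phi_descent[of k] by linarith
qed

lemma Phi_antimono: "k \<le> m \<Longrightarrow> \<Phi> (x m) \<le> \<Phi> (x k)"
  by (induction m rule: dec_induct) (auto intro: order_trans[OF Phi_Suc_le])

lemma Phi_xbar_le: "\<Phi> xbar \<le> \<Phi> (x k)"
proof (rule tendsto_le[OF _ tendsto_const])
  show "(\<lambda>i. \<Phi> (x (r i))) \<longlonglongrightarrow> \<Phi> xbar"
    using tendsto_Phi[OF LIMSEQ_subseq_xbar] by (simp add: o_def)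
  show "\<forall>\<^sub>F i in sequentially. \<Phi> (x (r i)) \<le> \<Phi> (x k)"
    using eventually_ge_at_top[of k]
    by eventually_elim (use seq_suble[OF strict_mono_r] in \<open>blast intro: Phi_antimono le_trans\<close>)
qed simp

lemma LIMSEQ_Phi: "(\<lambda>k. \<Phi> (x k)) \<longlonglongrightarrow> \<Phi> xbar"
proof -
  have "decseq (\<lambda>k. \<Phi> (x k))"
    by (simp add: decseq_def Phi_antimono)
  then obtain c where c: "(\<lambda>k. \<Phi> (x k)) \<longlonglongrightarrow> c"
    using Phi_xbar_le decseq_convergent by blast
  have "(\<lambda>i. \<Phi> (x (r i))) \<longlonglongrightarrow> c"
    using LIMSEQ_subseq_LIMSEQ[OF c strict_mono_r] by (simp add: o_def)
  moreover have "(\<lambda>i. \<Phi> (x (r i))) \<longlonglongrightarrow> \<Phi> xbar"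
    using tendsto_Phi[OF LIMSEQ_subseq_xbar] by (simp add: o_def)
  ultimately show ?thesis
    using c LIMSEQ_unique by metis
qed

lemma exists_index_near_xbar:
  assumes "0 < \<epsilon>" "0 < \<delta>"
  shows "\<exists>K. norm (x K - xbar) < \<epsilon> \<and> \<Phi> (x K) - \<Phi> xbar < \<delta>"
proof -
  have lim: "(\<lambda>i. \<Phi> (x (r i))) \<longlonglongrightarrow> \<Phi> xbar"
    using tendsto_Phi[OF LIMSEQ_subseq_xbar] by (simp add: o_def)
  have "\<forall>\<^sub>F i in sequentially. dist ((x \<circ> r) i) xbar < \<epsilon> \<and> dist (\<Phi> (x (r i))) (\<Phi> xbar) < \<delta>"
    using tendstoD[OF LIMSEQ_subseq_xbar assms(1)] tendstoD[OF lim assms(2)] by (rule eventually_conj)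
  then obtain i where "dist (x (r i)) xbar < \<epsilon>" "dist (\<Phi> (x (r i))) (\<Phi> xbar) < \<delta>"
    by (auto simp: eventually_sequentially)
  then show ?thesis
    by (intro exI[of _ "r i"]) (auto simp: dist_norm)
qed

lemma Phi_ge_after_failed_armijo:
  assumes "pk k \<noteq> 0" "norm (x (Suc k) - x k) < 1"
  shows "\<Phi> (x k) + norm (x (Suc k) - x k) * slope (x k) (dk k)
    \<le> \<Phi> (x k + (2 * norm (x (Suc k) - x k)) *\<^sub>R dk k)"
proof -
  obtain j where j: "\<forall>i<j. \<not> armijo f N (x k) (dk k) i" "x (Suc k) = x k + (1/2::real) ^ j *\<^sub>R dk k"
    using armijo_step_taken[OF assms(1)] by metis
  have step: "norm (x (Suc k) - x k) = (1/2) ^ j"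
    using j(2) assms(1) by (simp add: norm_sgn)
  then obtain i where i: "j = Suc i"
    using assms(2) by (cases j) auto
  then have "\<not> armijo f N (x k) (dk k) i"
    using j(1) by simp
  then have "\<Phi> (x k) + 1/2 * (1/2) ^ i * slope (x k) (dk k) \<le> \<Phi> (x k + (1/2::real) ^ i *\<^sub>R dk k)"
    by (simp add: armijo_def dirderiv_Phi not_less)
  moreover have "(1/2::real) ^ i = 2 * norm (x (Suc k) - x k)"
    using step i by simp
  ultimately show ?thesis
    by simp
qed

lemma failed_armijo_linearized:
  assumes "pk k \<noteq> 0" "norm (x (Suc k) - x k) < 1" and j0: "j0 \<in> active (x k)"
    and J: "J \<in> {1..N}" "\<Phi> (x k + t *\<^sub>R dk k) = f J (x k + t *\<^sub>R dk k)"
    and t: "t = 2 * norm (x (Suc k) - x k)"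
  shows "f j0 (x k) - f J (x k) \<le> t * (gf J (x k) \<bullet> dk k + w t - gf j0 (x k) \<bullet> dk k / 2)"
proof -
  have t0: "0 \<le> t"
    using t by simp
  have "norm (t *\<^sub>R dk k) = t"
    using t0 assms(1) by (simp add: norm_sgn)
  then have "f J (x k + t *\<^sub>R dk k) \<le> f J (x k) + t * (gf J (x k) \<bullet> dk k) + t * w t"
    using f_linearization[OF J(1), of "x k + t *\<^sub>R dk k" "x k"] by (simp add: abs_le_iff)
  moreover have "f j0 (x k) + t / 2 * (gf j0 (x k) \<bullet> dk k) \<le> \<Phi> (x k + t *\<^sub>R dk k)"
  proof -
    have "t / 2 * (gf j0 (x k) \<bullet> dk k) \<le> t / 2 * slope (x k) (dk k)"
      using slope_ge[OF j0] t0 by (intro mult_left_mono) auto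
    moreover have "f j0 (x k) = \<Phi> (x k)"
      using j0 by (simp add: active_def)
    ultimately show ?thesis
      using Phi_ge_after_failed_armijo[OF assms(1,2)] t by simp
  qed
  ultimately show ?thesis
    using J(2) by (simp add: algebra_simps)
qed

end

section \<open>Runs near a non-stationary accumulation point\<close>

text \<open>If \<open>xbar\<close> is not stationary, suitable \<open>\<rho>\<close>, \<open>\<beta>\<close>, \<open>q0\<close> and \<open>K\<close> satisfy the following
  assumptions (by \<open>qp_model_less_Phi_nearby\<close> and \<open>exists_index_near_xbar\<close>); they are contradictory.\<close>
locale algX_trapped = algX_run f gf N w x L xbar r
  for f :: "nat \<Rightarrow> 'a::euclidean_space \<Rightarrow> real" and gf N w x L xbar r +
  fixes \<rho> \<beta> :: real and q0 :: 'a and K :: nat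
  assumes \<rho>: "0 < \<rho>" "\<rho> \<le> 1" and \<beta>: "0 < \<beta>"
    and near_xbar: "\<And>y. norm (y - xbar) < \<rho> \<Longrightarrow> qp_model y q0 < \<Phi> xbar - 2 * \<beta> \<and> \<Phi> xbar - \<beta> < \<Phi> y"
    and x_K: "norm (x K - xbar) < \<rho> / 3" "\<Phi> (x K) - \<Phi> xbar < \<beta> / grad_bound xbar * \<rho> / 6"
begin

definition \<eta> :: real where
  "\<eta> = \<beta> / grad_bound xbar"

lemma \<eta>_pos: "0 < \<eta>"
  using \<beta> grad_bound_ge_1[of xbar] by (simp add: \<eta>_def)

lemma Phi_x_K_less: "\<Phi> (x K) - \<Phi> xbar < \<eta> * \<rho> / 6"
  using x_K(2) by (simp only: \<eta>_def)

lemma norm_pk_gt: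
  assumes "norm (x k - xbar) < \<rho>"
  shows "\<eta> < norm (pk k)"
proof -
  have "\<And>j. j \<in> {1..N} \<Longrightarrow> norm (gf j (x k)) \<le> grad_bound xbar"
    using assms \<rho> by (intro norm_gf_le_grad_bound) auto
  then have "\<Phi> (x k) - grad_bound xbar * norm (pk k) \<le> qp_model (x k) (pk k)"
    by (rule qp_model_ge)
  also have "\<dots> \<le> qp_model (x k) q0"
    using qp_model_quadratic_growth[OF qp_solution_L, of k q0] inner_ge_zero[of "q0 - pk k"] by linarith
  also have "\<dots> < \<Phi> (x k) - \<beta>"
    using near_xbar[OF assms] by simp
  finally have "\<beta> < grad_bound xbar * norm (pk k)"
    by simp
  then show ?thesis
    using grad_bound_ge_1[of xbar] by (simp add: \<eta>_def divide_less_eq mult.commute)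
qed

lemma norm_pk_le:
  assumes "norm (x k - xbar) \<le> 1"
  shows "norm (pk k) \<le> 2 * grad_bound xbar"
proof -
  have "\<And>j. j \<in> {1..N} \<Longrightarrow> norm (gf j (x k)) \<le> grad_bound xbar"
    using assms by (intro norm_gf_le_grad_bound) auto
  then have "\<Phi> (x k) - grad_bound xbar * norm (pk k) \<le> qp_model (x k) (pk k)"
    by (rule qp_model_ge)
  moreover have "qp_model (x k) (pk k) + 1/2 * ((0 - pk k) \<bullet> (0 - pk k)) \<le> \<Phi> (x k)"
    using qp_model_quadratic_growth[OF qp_solution_L, of k 0] by (simp only: qp_model_0)
  moreover have "(0 - pk k) \<bullet> (0 - pk k) = norm (pk k) * norm (pk k)"
    by (simp flip: power2_norm_eq_inner power2_eq_square)
  ultimately have "norm (pk k) * norm (pk k) \<le> (2 * grad_bound xbar) * norm (pk k)"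
    by simp
  then have "norm (pk k) * norm (pk k) \<le> (2 * grad_bound xbar) * norm (pk k)"
    by simp
  then show ?thesis
    using grad_bound_ge_1[of xbar] by (cases "pk k = 0") auto
qed

lemma step_le_Phi_decrease:
  assumes "norm (x k - xbar) < \<rho>"
  shows "norm (x (Suc k) - x k) \<le> 2 / \<eta> * (\<Phi> (x k) - \<Phi> (x (Suc k)))"
proof -
  have "norm (x (Suc k) - x k) * \<eta> \<le> norm (x (Suc k) - x k) * norm (pk k)"
    using norm_pk_gt[OF assms] by (intro mult_left_mono) auto
  also have "\<dots> \<le> 2 * (\<Phi> (x k) - \<Phi> (x (Suc k)))"
    using Phi_descent[of k] by simp
  finally show ?thesis
    using \<eta>_pos by (simp add: field_simps)
qed

lemma near_xbar_from_K: "K \<le> k \<Longrightarrow> norm (x k - xbar) < \<rho>"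
proof (induction k rule: less_induct)
  case (less k)
  show ?case
  proof (cases "k = K")
    case True
    then show ?thesis
      using x_K \<rho> by simp
  next
    case False
    have "norm (x k - x K) \<le> 2 / \<eta> * (\<Phi> (x K) - \<Phi> (x k))"
    proof (rule norm_diff_le_telescoping[where \<phi> = "\<lambda>i. \<Phi> (x i)"])
      show "K \<le> k"
        using less by simp
      fix i assume "K \<le> i" "i < k"
      then show "norm (x (Suc i) - x i) \<le> 2 / \<eta> * (\<Phi> (x i) - \<Phi> (x (Suc i)))"
        using less.IH by (intro step_le_Phi_decrease) auto
    qed
    also have "\<dots> \<le> 2 / \<eta> * (\<Phi> (x K) - \<Phi> xbar)"
      using Phi_xbar_le \<eta>_pos by (intro mult_left_mono) auto
    also have "\<dots> < 2 / \<eta> * (\<eta> * \<rho> / 6)"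
      by (rule mult_strict_left_mono[OF Phi_x_K_less]) (use \<eta>_pos in simp)
    finally have "norm (x k - x K) < \<rho> / 3"
      using \<eta>_pos by simp
    then show ?thesis
      using x_K(1) \<rho>(1) norm_triangle_ineq[of "x k - x K" "x K - xbar"] by simp
  qed
qed

lemma path_length_le:
  assumes "K \<le> k" "k \<le> m"
  shows "norm (x m - x k) \<le> 2 / \<eta> * (\<Phi> (x k) - \<Phi> (x m))"
proof (rule norm_diff_le_telescoping[where \<phi> = "\<lambda>i. \<Phi> (x i)", OF assms(2)])
  fix i assume "k \<le> i" "i < m"
  then show "norm (x (Suc i) - x i) \<le> 2 / \<eta> * (\<Phi> (x i) - \<Phi> (x (Suc i)))"
    using assms(1) by (intro step_le_Phi_decrease near_xbar_from_K) linarith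
qed

lemma dist_xbar_le:
  assumes "K \<le> k"
  shows "norm (x k - xbar) \<le> 2 / \<eta> * (\<Phi> (x k) - \<Phi> xbar)"
proof (rule tendsto_le[OF trivial_limit_sequentially])
  show "(\<lambda>i. norm (x (r i) - x k)) \<longlonglongrightarrow> norm (x k - xbar)"
    using LIMSEQ_subseq_xbar by (auto intro!: tendsto_eq_intros simp: o_def norm_minus_commute)
  show "(\<lambda>i. 2 / \<eta> * (\<Phi> (x k) - \<Phi> (x (r i)))) \<longlonglongrightarrow> 2 / \<eta> * (\<Phi> (x k) - \<Phi> xbar)"
    using tendsto_Phi[OF LIMSEQ_subseq_xbar] \<eta>_pos by (auto intro!: tendsto_intros simp: o_def)
  show "\<forall>\<^sub>F i in sequentially. norm (x (r i) - x k) \<le> 2 / \<eta> * (\<Phi> (x k) - \<Phi> (x (r i)))"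
    using eventually_ge_at_top[of k]
    by eventually_elim (use assms seq_suble[OF strict_mono_r] in \<open>blast intro: path_length_le le_trans\<close>)
qed

lemma LIMSEQ_x: "x \<longlonglongrightarrow> xbar"
proof -
  have "(\<lambda>k. x k - xbar) \<longlonglongrightarrow> 0"
  proof (rule Lim_null_comparison)
    show "\<forall>\<^sub>F k in sequentially. norm (x k - xbar) \<le> 2 / \<eta> * (\<Phi> (x k) - \<Phi> xbar)"
      using eventually_ge_at_top[of K] by eventually_elim (rule dist_xbar_le)
    show "(\<lambda>k. 2 / \<eta> * (\<Phi> (x k) - \<Phi> xbar)) \<longlonglongrightarrow> 0"
      using LIMSEQ_Phi \<eta>_pos by (auto intro!: tendsto_eq_intros)
  qed
  then show ?thesis
    by (simp add: LIM_zero_iff)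
qed

lemma LIMSEQ_step_length: "(\<lambda>k. norm (x (Suc k) - x k)) \<longlonglongrightarrow> 0"
proof (rule Lim_null_comparison)
  show "\<forall>\<^sub>F k in sequentially. norm (norm (x (Suc k) - x k)) \<le> 2 / \<eta> * (\<Phi> (x k) - \<Phi> (x (Suc k)))"
    using eventually_ge_at_top[of K]
  proof eventually_elim
    case (elim k)
    show ?case
      using step_le_Phi_decrease[OF near_xbar_from_K[OF elim]] by simp
  qed
  show "(\<lambda>k. 2 / \<eta> * (\<Phi> (x k) - \<Phi> (x (Suc k)))) \<longlonglongrightarrow> 0"
    using LIMSEQ_Phi LIMSEQ_Suc[OF LIMSEQ_Phi] \<eta>_pos by (auto intro!: tendsto_eq_intros)
qed

lemma pk_nonzero: "K \<le> k \<Longrightarrow> pk k \<noteq> 0"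
  using norm_pk_gt[OF near_xbar_from_K] \<eta>_pos by force

lemma x_ne_xbar:
  assumes "K \<le> k"
  shows "x k \<noteq> xbar"
proof
  assume "x k = xbar"
  obtain j where "norm (x (Suc k) - x k) = (1/2) ^ j"
    using step_length[OF pk_nonzero[OF assms]] by blast
  then have "0 < 1/2 * norm (x (Suc k) - x k) * norm (pk k)"
    using pk_nonzero[OF assms] by simp
  then have "\<Phi> (x (Suc k)) < \<Phi> xbar"
    using Phi_descent[of k] \<open>x k = xbar\<close> by simp
  then show False
    using Phi_xbar_le[of "Suc k"] by simp
qed

lemma exists_qp_model_minimizer_xbar:
  "\<exists>p. \<forall>q. qp_model xbar p + 1/2 * ((q - p) \<bullet> (q - p)) \<le> qp_model xbar q"
proof -
  have "norm (pk (K + i)) \<le> 2 * grad_bound xbar" for i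
    using near_xbar_from_K[of "K + i"] \<rho> by (intro norm_pk_le) simp
  then have "bounded (range (\<lambda>i. pk (K + i)))"
    unfolding bounded_iff by blast
  then obtain l s where s: "strict_mono s" "((\<lambda>i. pk (K + i)) \<circ> s) \<longlonglongrightarrow> l"
    using bounded_imp_convergent_subsequence by blast
  have xs: "(\<lambda>i. x (K + s i)) \<longlonglongrightarrow> xbar"
    using LIMSEQ_subseq_LIMSEQ[OF LIMSEQ_ignore_initial_segment[OF LIMSEQ_x, of K] s(1)]
    by (simp add: o_def add.commute)
  have ps: "(\<lambda>i. pk (K + s i)) \<longlonglongrightarrow> l"
    using s(2) by (simp add: o_def)
  have "qp_model xbar l + 1/2 * ((q - l) \<bullet> (q - l)) \<le> qp_model xbar q" for q
  proof (rule tendsto_le[OF trivial_limit_sequentially])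
    show "(\<lambda>i. qp_model (x (K + s i)) q) \<longlonglongrightarrow> qp_model xbar q"
      by (rule tendsto_qp_model[OF xs tendsto_const])
    show "(\<lambda>i. qp_model (x (K + s i)) (pk (K + s i)) + 1/2 * ((q - pk (K + s i)) \<bullet> (q - pk (K + s i))))
        \<longlonglongrightarrow> qp_model xbar l + 1/2 * ((q - l) \<bullet> (q - l))"
      by (intro tendsto_intros tendsto_qp_model[OF xs ps] ps)
    show "\<forall>\<^sub>F i in sequentially. qp_model (x (K + s i)) (pk (K + s i))
        + 1/2 * ((q - pk (K + s i)) \<bullet> (q - pk (K + s i))) \<le> qp_model (x (K + s i)) q"
      by (intro always_eventually allI qp_model_quadratic_growth qp_solution_L)
  qed
  then show ?thesis
    by blast
qed

definition pbar :: 'a where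
  "pbar = (SOME p. \<forall>q. qp_model xbar p + 1/2 * ((q - p) \<bullet> (q - p)) \<le> qp_model xbar q)"

lemma qp_model_growth_pbar: "qp_model xbar pbar + 1/2 * ((q - pbar) \<bullet> (q - pbar)) \<le> qp_model xbar q"
  using someI_ex[OF exists_qp_model_minimizer_xbar] unfolding pbar_def by blast

lemma LIMSEQ_pk: "pk \<longlonglongrightarrow> pbar"
proof -
  define C where "C = norm pbar + 2 * grad_bound xbar"
  define E where "E k = (\<Sum>j=1..N. \<bar>f j (x k) - f j xbar\<bar> + norm (gf j (x k) - gf j xbar) * C)" for k
  have bound: "norm (pk k - pbar) ^ 2 \<le> 2 * E k" if "K \<le> k" for k
  proof -
    have "norm (pk k) \<le> 2 * grad_bound xbar"
      using near_xbar_from_K[OF that] \<rho> by (intro norm_pk_le) simp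
    then have "norm (pk k) \<le> C"
      using norm_ge_zero[of pbar] unfolding C_def by linarith
    moreover have "norm pbar \<le> C"
      using grad_bound_ge_1[of xbar] by (simp add: C_def)
    ultimately show ?thesis
      unfolding E_def
      by (intro qp_minimizers_close qp_model_quadratic_growth[OF qp_solution_L] qp_model_growth_pbar)
  qed
  have "\<forall>\<^sub>F k in sequentially. norm (pk k - pbar) \<le> sqrt (2 * E k)"
    using eventually_ge_at_top[of K] by eventually_elim (simp add: bound real_le_rsqrt)
  moreover have "E \<longlonglongrightarrow> (\<Sum>j=1..N. \<bar>f j xbar - f j xbar\<bar> + norm (gf j xbar - gf j xbar) * C)"
    unfolding E_def by (intro tendsto_intros tendsto_f tendsto_gf LIMSEQ_x) auto
  then have "(\<lambda>k. sqrt (2 * E k)) \<longlonglongrightarrow> 0"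
    using tendsto_real_sqrt[of "\<lambda>k. 2 * E k" 0] by (auto intro: tendsto_mult_right_zero)
  ultimately have "(\<lambda>k. pk k - pbar) \<longlonglongrightarrow> 0"
    by (rule Lim_null_comparison)
  then show ?thesis
    by (simp add: LIM_zero_iff)
qed

lemma norm_pbar_ge: "\<eta> \<le> norm pbar"
proof (rule tendsto_le[OF trivial_limit_sequentially])
  show "(\<lambda>k. norm (pk k)) \<longlonglongrightarrow> norm pbar"
    by (intro tendsto_intros LIMSEQ_pk)
  show "\<forall>\<^sub>F k in sequentially. \<eta> \<le> norm (pk k)"
    using eventually_ge_at_top[of K]
    by eventually_elim (use norm_pk_gt near_xbar_from_K in \<open>blast intro: less_imp_le\<close>)
qed simp

lemma pbar_nonzero: "pbar \<noteq> 0"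
  using norm_pbar_ge \<eta>_pos by auto

definition dbar :: 'a where
  "dbar = sgn pbar"

lemma norm_dbar: "norm dbar = 1"
  using pbar_nonzero by (simp add: dbar_def norm_sgn)

lemma LIMSEQ_dk: "dk \<longlonglongrightarrow> dbar"
  unfolding dbar_def by (intro tendsto_sgn LIMSEQ_pk pbar_nonzero)

lemma pbar_le_Phi:
  assumes j: "j \<in> {1..N}"
  shows "f j xbar + gf j xbar \<bullet> pbar \<le> \<Phi> xbar - pbar \<bullet> pbar"
proof (rule tendsto_le[OF trivial_limit_sequentially])
  show "(\<lambda>k. \<Phi> (x k) - pk k \<bullet> pk k) \<longlonglongrightarrow> \<Phi> xbar - pbar \<bullet> pbar"
    by (intro tendsto_intros LIMSEQ_Phi LIMSEQ_pk)
  show "(\<lambda>k. f j (x k) + gf j (x k) \<bullet> pk k) \<longlonglongrightarrow> f j xbar + gf j xbar \<bullet> pbar"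
    using j by (intro tendsto_intros tendsto_f tendsto_gf LIMSEQ_x LIMSEQ_pk)
  show "\<forall>\<^sub>F k in sequentially. f j (x k) + gf j (x k) \<bullet> pk k \<le> \<Phi> (x k) - pk k \<bullet> pk k"
    using j by (intro always_eventually allI qp_solution_le_Phi qp_solution_L)
qed

lemma norm_pbar_le_rate:
  assumes "j \<in> active xbar"
  shows "norm pbar \<le> - (gf j xbar \<bullet> dbar)"
proof -
  have "gf j xbar \<bullet> pbar \<le> - (norm pbar * norm pbar)"
    using pbar_le_Phi[of j] assms by (simp add: active_def dot_square_norm power2_eq_square)
  then have "(gf j xbar \<bullet> pbar) / norm pbar \<le> - norm pbar"
    using pbar_nonzero by (simp add: divide_le_eq)
  then show ?thesis
    by (simp add: dbar_def sgn_div_norm divide_inverse mult.commute)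
qed

lemma rate_le_grad_bound:
  assumes "j \<in> {1..N}"
  shows "- (gf j xbar \<bullet> dbar) \<le> grad_bound xbar"
proof -
  have "- (gf j xbar \<bullet> dbar) \<le> norm (gf j xbar) * norm dbar"
    using Cauchy_Schwarz_ineq2[of "gf j xbar" dbar] by linarith
  then show ?thesis
    using norm_gf_le_grad_bound[OF assms, of xbar xbar] norm_dbar by simp
qed

lemma eventually_aligned:
  assumes "0 < e"
  shows "\<forall>\<^sub>F k in sequentially. norm ((xbar - x k) - norm (xbar - x k) *\<^sub>R dbar) \<le> e * norm (xbar - x k)"
proof -
  define \<delta> where "\<delta> = min (1/2) (e/4)"
  have \<delta>: "0 < \<delta>" "\<delta> \<le> 1/2" "4 * \<delta> \<le> e"
    using assms by (auto simp: \<delta>_def)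
  obtain K1 where K1: "\<And>i. K1 \<le> i \<Longrightarrow> norm (dk i - dbar) \<le> \<delta>"
    using LIMSEQ_D[OF LIMSEQ_dk \<delta>(1)] less_imp_le by blast
  have "norm ((xbar - x k) - norm (xbar - x k) *\<^sub>R dbar) \<le> e * norm (xbar - x k)" if k: "K1 \<le> k" for k
  proof (rule tendsto_le[OF trivial_limit_sequentially])
    have lim: "(\<lambda>m. x (m + k) - x k) \<longlonglongrightarrow> xbar - x k"
      using LIMSEQ_ignore_initial_segment[OF LIMSEQ_x, of k] by (intro tendsto_intros)
    show "(\<lambda>m. e * norm (x (m + k) - x k)) \<longlonglongrightarrow> e * norm (xbar - x k)"
      by (intro tendsto_intros lim)
    show "(\<lambda>m. norm ((x (m + k) - x k) - norm (x (m + k) - x k) *\<^sub>R dbar))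
        \<longlonglongrightarrow> norm ((xbar - x k) - norm (xbar - x k) *\<^sub>R dbar)"
      by (intro tendsto_intros lim)
    show "\<forall>\<^sub>F m in sequentially.
        norm ((x (m + k) - x k) - norm (x (m + k) - x k) *\<^sub>R dbar) \<le> e * norm (x (m + k) - x k)"
    proof (intro always_eventually allI)
      fix m
      obtain S where "0 \<le> S" "norm (x (k + m) - x k - S *\<^sub>R dbar) \<le> \<delta> * S"
        using path_near_ray[of k dbar \<delta> m] K1 k by auto
      then have "norm ((x (k + m) - x k) - norm (x (k + m) - x k) *\<^sub>R dbar)
          \<le> 4 * \<delta> * norm (x (k + m) - x k)"
        using \<delta> norm_dbar by (intro norm_diff_scaleR_unit_le) auto
      also have "\<dots> \<le> e * norm (x (k + m) - x k)"
        using \<delta> by (intro mult_right_mono) auto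
      finally show "norm ((x (m + k) - x k) - norm (x (m + k) - x k) *\<^sub>R dbar)
          \<le> e * norm (x (m + k) - x k)"
        by (simp add: add.commute)
    qed
  qed
  then show ?thesis
    unfolding eventually_sequentially by blast
qed

lemma LIMSEQ_sgn_xbar_minus_x: "(\<lambda>k. sgn (xbar - x k)) \<longlonglongrightarrow> dbar"
proof (rule tendstoI)
  fix e :: real assume e: "0 < e"
  then have "0 < e / 2"
    by simp
  show "\<forall>\<^sub>F k in sequentially. dist (sgn (xbar - x k)) dbar < e"
    using eventually_aligned[OF \<open>0 < e / 2\<close>] eventually_ge_at_top[of K]
  proof eventually_elim
    case (elim k)
    define u where "u = xbar - x k"
    have u: "u \<noteq> 0"
      using x_ne_xbar[OF elim(2)] by (simp add: u_def)
    have "sgn u - dbar = (1 / norm u) *\<^sub>R (u - norm u *\<^sub>R dbar)"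
      using u by (simp add: sgn_div_norm divide_inverse algebra_simps)
    then have "dist (sgn u) dbar = norm (u - norm u *\<^sub>R dbar) / norm u"
      by (simp add: dist_norm)
    also have "\<dots> \<le> e / 2"
      using elim(1) u e by (simp add: u_def pos_divide_le_eq)
    finally show ?case
      using e by (simp add: u_def)
  qed
qed

lemma LIMSEQ_active_difference_quotient:
  assumes j: "j \<in> active xbar"
  shows "(\<lambda>k. (f j (x k) - \<Phi> xbar) / norm (x k - xbar)) \<longlonglongrightarrow> - (gf j xbar \<bullet> dbar)"
proof -
  have jN: "j \<in> {1..N}" and fj: "f j xbar = \<Phi> xbar"
    using j by (auto simp: active_def)
  have "(\<lambda>k. - (gf j xbar \<bullet> sgn (xbar - x k))
      + (f j (x k) - f j xbar - gf j xbar \<bullet> (x k - xbar)) / norm (x k - xbar))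
    \<longlonglongrightarrow> - (gf j xbar \<bullet> dbar) + 0"
    by (intro tendsto_intros LIMSEQ_sgn_xbar_minus_x LIMSEQ_linearization_remainder jN LIMSEQ_x)
  moreover have "\<forall>\<^sub>F k in sequentially. - (gf j xbar \<bullet> sgn (xbar - x k))
      + (f j (x k) - f j xbar - gf j xbar \<bullet> (x k - xbar)) / norm (x k - xbar)
    = (f j (x k) - \<Phi> xbar) / norm (x k - xbar)"
    using eventually_ge_at_top[of K]
  proof eventually_elim
    case (elim k)
    have "gf j xbar \<bullet> sgn (xbar - x k) = - (gf j xbar \<bullet> (x k - xbar)) / norm (x k - xbar)"
      by (simp add: sgn_div_norm norm_minus_commute inner_diff_right divide_inverse mult.commute)
    then show ?case
      using x_ne_xbar[OF elim] by (simp add: fj diff_divide_distrib)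
  qed
  ultimately show ?thesis
    by (simp add: Lim_transform_eventually)
qed

lemma eventually_step_le:
  assumes "0 < e"
  shows "\<forall>\<^sub>F k in sequentially. norm (x (Suc k) - x k) \<le> (1 + e) * norm (x k - xbar)"
proof -
  have dbar_dbar: "dbar \<bullet> dbar = 1"
    using norm_dbar by (simp add: dot_square_norm)
  have "(\<lambda>k. dk k \<bullet> dbar) \<longlonglongrightarrow> dbar \<bullet> dbar"
    by (intro tendsto_intros LIMSEQ_dk)
  moreover have "1 / (1 + e) < dbar \<bullet> dbar"
    using assms dbar_dbar by simp
  ultimately have ev_dir: "\<forall>\<^sub>F k in sequentially. 1 / (1 + e) < dk k \<bullet> dbar"
    by (rule order_tendstoD(1))
  have "(\<lambda>k. sgn (xbar - x (Suc k)) \<bullet> dbar) \<longlonglongrightarrow> dbar \<bullet> dbar"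
    by (intro tendsto_intros LIMSEQ_Suc[OF LIMSEQ_sgn_xbar_minus_x])
  then have ev_ahead: "\<forall>\<^sub>F k in sequentially. 0 < sgn (xbar - x (Suc k)) \<bullet> dbar"
    using dbar_dbar by (intro order_tendstoD(1)) auto
  show ?thesis
    using ev_dir ev_ahead
  proof eventually_elim
    case (elim k)
    define u where "u = xbar - x (Suc k)"
    have "u \<bullet> dbar = norm u * (sgn u \<bullet> dbar)"
      by (cases "u = 0") (simp_all add: sgn_div_norm)
    then have "norm (x (Suc k) - x k) * (dk k \<bullet> dbar) \<le> norm (x k - xbar)"
      using elim(2) by (intro step_mul_inner_le norm_dbar) (simp add: u_def)
    moreover have "norm (x (Suc k) - x k) * (1 / (1 + e)) \<le> norm (x (Suc k) - x k) * (dk k \<bullet> dbar)"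
      using elim(1) by (intro mult_left_mono) auto
    ultimately have "norm (x (Suc k) - x k) * (1 / (1 + e)) \<le> norm (x k - xbar)"
      by linarith
    then show ?case
      using assms by (simp add: divide_le_eq mult.commute)
  qed
qed

lemma norm_pbar_le_at_good_index:
  assumes k: "K \<le> k" and \<epsilon>: "\<epsilon> \<le> 1"
    and step: "norm (x (Suc k) - x k) < 1" "norm (x (Suc k) - x k) \<le> (1 + \<epsilon> / 2) * norm (x k - xbar)"
    and w_step: "w (2 * norm (x (Suc k) - x k)) \<le> \<epsilon>"
    and active_x: "active (x k) \<subseteq> active xbar"
    and active_y: "active (x k + (2 * norm (x (Suc k) - x k)) *\<^sub>R dk k) \<subseteq> active xbar"
    and quotient: "\<And>j. j \<in> active xbar \<Longrightarrow>
      \<bar>(f j (x k) - \<Phi> xbar) / norm (x k - xbar) - - (gf j xbar \<bullet> dbar)\<bar> \<le> \<epsilon>"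
    and gradient: "\<And>j. j \<in> active xbar \<Longrightarrow> \<bar>gf j (x k) \<bullet> dk k + - (gf j xbar \<bullet> dbar)\<bar> \<le> \<epsilon>"
  shows "norm pbar \<le> (grad_bound xbar + 14) * \<epsilon>"
proof -
  define t where "t = 2 * norm (x (Suc k) - x k)"
  define R where "R = norm (x k - xbar)"
  have R: "0 < R"
    using x_ne_xbar[OF k] by (simp add: R_def)
  have pk: "pk k \<noteq> 0"
    using pk_nonzero[OF k] .
  have t: "0 < t"
    using step_length[OF pk] by (metis t_def zero_less_divide_1_iff zero_less_numeral zero_less_power
        mult_pos_pos)
  obtain j0 where j0: "j0 \<in> active (x k)"
    using active_nonempty by blast
  obtain J where J: "J \<in> {1..N}" "\<Phi> (x k + t *\<^sub>R dk k) = f J (x k + t *\<^sub>R dk k)"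
    using Phi_attained by metis
  have j0_xbar: "j0 \<in> active xbar" and J_xbar: "J \<in> active xbar"
    using j0 J active_x active_y by (auto simp: active_def t_def)
  define D where "D = gf J (x k) \<bullet> dk k + w t - gf j0 (x k) \<bullet> dk k / 2"
  have key: "f j0 (x k) - f J (x k) \<le> t * D"
    unfolding D_def by (rule failed_armijo_linearized[OF pk step(1) j0 J t_def])
  moreover have "f J (x k) \<le> f j0 (x k)"
    using f_le_Phi[OF J(1)] j0 by (simp add: active_def)
  ultimately have "0 \<le> t * D"
    by linarith
  then have "0 \<le> D"
    using t by (simp add: zero_le_mult_iff)
  have "(f j0 (x k) - \<Phi> xbar) / R - (f J (x k) - \<Phi> xbar) / R \<le> t / R * D"
    using key R by (simp add: diff_divide_distrib[symmetric] divide_right_mono)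
  moreover have "t / R \<le> 2 + \<epsilon>"
    using step(2) R by (simp add: t_def R_def divide_le_eq algebra_simps)
  ultimately show ?thesis
    using rate_estimates_bound[of "norm pbar" "- (gf J xbar \<bullet> dbar)" "- (gf j0 xbar \<bullet> dbar)"
        "grad_bound xbar" \<epsilon> "(f J (x k) - \<Phi> xbar) / R" "(f j0 (x k) - \<Phi> xbar) / R"
        "gf J (x k) \<bullet> dk k" "gf j0 (x k) \<bullet> dk k" "w t" "t / R"]
      pbar_nonzero norm_pbar_le_rate[OF J_xbar] norm_pbar_le_rate[OF j0_xbar]
      rate_le_grad_bound j0_xbar quotient[OF J_xbar] quotient[OF j0_xbar]
      gradient[OF J_xbar] gradient[OF j0_xbar] w_nonneg w_step t R \<epsilon> \<open>0 \<le> D\<close>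
    by (auto simp: D_def R_def t_def active_def)
qed

lemma eventually_w_double_step_le:
  assumes "0 < \<epsilon>"
  shows "\<forall>\<^sub>F k in sequentially. w (2 * norm (x (Suc k) - x k)) \<le> \<epsilon>"
proof -
  have "(\<lambda>k. 2 * norm (x (Suc k) - x k)) \<longlonglongrightarrow> 0"
    using tendsto_mult_right_zero[OF LIMSEQ_step_length] by simp
  then have "(\<lambda>k. w (2 * norm (x (Suc k) - x k))) \<longlonglongrightarrow> 0"
    by (rule tendsto_w) simp
  then have "\<forall>\<^sub>F k in sequentially. w (2 * norm (x (Suc k) - x k)) < \<epsilon>"
    using assms by (rule order_tendstoD(2))
  then show ?thesis
    by eventually_elim simp
qed

lemma eventually_active_after_double_step:
  "\<forall>\<^sub>F k in sequentially. active (x k + (2 * norm (x (Suc k) - x k)) *\<^sub>R dk k) \<subseteq> active xbar"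
proof (rule eventually_active_subset)
  have "(\<lambda>k. x k + (2 * norm (x (Suc k) - x k)) *\<^sub>R dk k) \<longlonglongrightarrow> xbar + (2 * 0) *\<^sub>R dbar"
    by (intro tendsto_intros LIMSEQ_x LIMSEQ_step_length LIMSEQ_dk)
  then show "(\<lambda>k. x k + (2 * norm (x (Suc k) - x k)) *\<^sub>R dk k) \<longlonglongrightarrow> xbar"
    by simp
qed

lemma eventually_rate_estimates:
  assumes "0 < \<epsilon>"
  shows "\<forall>\<^sub>F k in sequentially. \<forall>j\<in>active xbar.
    \<bar>(f j (x k) - \<Phi> xbar) / norm (x k - xbar) - - (gf j xbar \<bullet> dbar)\<bar> \<le> \<epsilon> \<and>
    \<bar>gf j (x k) \<bullet> dk k + - (gf j xbar \<bullet> dbar)\<bar> \<le> \<epsilon>"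
proof (rule eventually_ball_finite[OF finite_active], intro ballI)
  fix j assume j: "j \<in> active xbar"
  then have "j \<in> {1..N}"
    by (simp add: active_def)
  then have "(\<lambda>k. gf j (x k) \<bullet> dk k) \<longlonglongrightarrow> gf j xbar \<bullet> dbar"
    by (intro tendsto_intros tendsto_gf LIMSEQ_x LIMSEQ_dk)
  from tendstoD[OF LIMSEQ_active_difference_quotient[OF j] assms] tendstoD[OF this assms]
  show "\<forall>\<^sub>F k in sequentially.
      \<bar>(f j (x k) - \<Phi> xbar) / norm (x k - xbar) - - (gf j xbar \<bullet> dbar)\<bar> \<le> \<epsilon> \<and>
      \<bar>gf j (x k) \<bullet> dk k + - (gf j xbar \<bullet> dbar)\<bar> \<le> \<epsilon>"
    by eventually_elim (simp add: dist_real_def)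
qed

lemma norm_pbar_le:
  assumes \<epsilon>: "0 < \<epsilon>" "\<epsilon> \<le> 1"
  shows "norm pbar \<le> (grad_bound xbar + 14) * \<epsilon>"
proof -
  have "0 < \<epsilon> / 2"
    using \<epsilon> by simp
  have "\<forall>\<^sub>F k in sequentially. norm pbar \<le> (grad_bound xbar + 14) * \<epsilon>"
    using eventually_ge_at_top[of K] order_tendstoD(2)[OF LIMSEQ_step_length zero_less_one]
      eventually_step_le[OF \<open>0 < \<epsilon> / 2\<close>] eventually_w_double_step_le[OF \<epsilon>(1)]
      eventually_active_subset[OF LIMSEQ_x] eventually_active_after_double_step
      eventually_rate_estimates[OF \<epsilon>(1)]
  proof eventually_elim
    case (elim k)
    then show ?case
      by (intro norm_pbar_le_at_good_index \<epsilon>(2)) auto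
  qed
  then show ?thesis
    by (simp add: eventually_const_iff)
qed

lemma absurd: False
proof -
  define h where "h = norm pbar"
  define G where "G = grad_bound xbar"
  define \<epsilon> where "\<epsilon> = min 1 (h / (2 * (G + 14)))"
  have h: "0 < h"
    using pbar_nonzero by (simp add: h_def)
  have G: "1 \<le> G"
    using grad_bound_ge_1 by (simp add: G_def)
  have \<epsilon>: "0 < \<epsilon>" "\<epsilon> \<le> 1"
    using h G by (auto simp: \<epsilon>_def)
  have "(G + 14) * \<epsilon> \<le> (G + 14) * (h / (2 * (G + 14)))"
    using G by (intro mult_left_mono) (auto simp: \<epsilon>_def)
  also have "\<dots> = h / 2"
    using G by (simp add: field_simps)
  finally have "(G + 14) * \<epsilon> \<le> h / 2" .
  then show False
    using norm_pbar_le[OF \<epsilon>] h unfolding h_def G_def by linarith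
qed

end

context algX_run
begin

lemma slope_xbar_nonneg: "0 \<le> slope xbar d"
proof (rule ccontr)
  assume "\<not> 0 \<le> slope xbar d"
  then obtain q0 where "qp_model xbar q0 < \<Phi> xbar"
    using exists_qp_model_less_Phi by (meson not_le)
  then obtain \<rho> \<beta> where \<rho>\<beta>: "0 < \<rho>" "\<rho> \<le> 1" "0 < \<beta>"
    "\<And>y. norm (y - xbar) < \<rho> \<Longrightarrow> qp_model y q0 < \<Phi> xbar - 2 * \<beta> \<and> \<Phi> xbar - \<beta> < \<Phi> y"
    using qp_model_less_Phi_nearby by blast
  moreover obtain K where "norm (x K - xbar) < \<rho> / 3" "\<Phi> (x K) - \<Phi> xbar < \<beta> / grad_bound xbar * \<rho> / 6"
    using exists_index_near_xbar[of "\<rho> / 3" "\<beta> / grad_bound xbar * \<rho> / 6"] \<rho>\<beta> grad_bound_ge_1[of xbar]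
    by auto
  ultimately interpret algX_trapped f gf N w x L xbar r \<rho> \<beta> q0 K
    by unfold_locales auto
  show False
    by (rule absurd)
qed

end

theorem theorem6:
  fixes f :: "nat \<Rightarrow> real ^ 'n \<Rightarrow> real"
    and gf :: "nat \<Rightarrow> real ^ 'n \<Rightarrow> real ^ 'n"
    and N :: nat and M :: real and w :: "real \<Rightarrow> real"
    and x :: "nat \<Rightarrow> real ^ 'n" and xbar :: "real ^ 'n"
  assumes N: "N \<ge> 1"
    and H1: "\<And>j y. j \<in> {1..N} \<Longrightarrow> f j y \<ge> M"
    and grad: "\<And>j y. j \<in> {1..N} \<Longrightarrow> (f j has_derivative (\<lambda>h. gf j y \<bullet> h)) (at y)"
    and C1: "\<And>j. j \<in> {1..N} \<Longrightarrow> continuous_on UNIV (gf j)"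
    and w_mono: "mono_on {0..} w"
    and w_nonneg: "\<And>t. t \<ge> 0 \<Longrightarrow> w t \<ge> 0"
    and w0: "w 0 = 0"
    and w_cont: "continuous (at 0 within {0..}) w"
    and H2: "\<And>j y z. j \<in> {1..N} \<Longrightarrow> norm (gf j y - gf j z) \<le> w (norm (y - z))"
    and x0: "x 0 = 0"
    and step: "\<And>k. algX_step f gf N (x k) (x (Suc k))"
    and acc: "\<exists>r. strict_mono r \<and> (x \<circ> r) \<longlonglongrightarrow> xbar"
  shows "\<forall>d. dirderiv (Phi f N) xbar d \<ge> 0"
proof -
  interpret max_family f gf N w
    using N grad C1 w_mono w0 w_cont H2 by unfold_locales auto
  obtain r where "strict_mono r" "(x \<circ> r) \<longlonglongrightarrow> xbar"
    using acc by blast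
  moreover have "\<forall>k. \<exists>l. qp_solution (x k) l \<and>
      (if qp_dir (x k) l = 0 then x (Suc k) = x k
       else armijo_step (x k) (sgn (qp_dir (x k) l)) (x (Suc k)))"
    using algX_step_imp[OF step] by blast
  then obtain L where "\<forall>k. qp_solution (x k) (L k) \<and>
      (if qp_dir (x k) (L k) = 0 then x (Suc k) = x k
       else armijo_step (x k) (sgn (qp_dir (x k) (L k))) (x (Suc k)))"
    by metis
  ultimately interpret algX_run f gf N w x L xbar r
    by unfold_locales auto
  show ?thesis
    using slope_xbar_nonneg by (simp add: dirderiv_Phi)
qed

end
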